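(* Let $C$ be an ordinary non-singular plane quartic defined over $k$, let $\gamma\in\Gamma$, $Q\in\mathcal{D}_\gamma$, and let $\phi:C\to C_Q$ be an isomorphism with $\sigma\phi\circ\phi^{-1}=\gamma$. Let $\mathcal{B}$ be the set of bitangents of $C$. Then $\mathrm{Aut}_k(\mathcal{B})=\phi^{-1}\circ\Gamma_\gamma\circ\phi$. Moreover, if $C'$ is another ordinary non-singular plane quartic with $\phi(C')=C_{Q'}$ for some $Q'\in\mathcal{Q}$, then $$\mathrm{Isom}_k(C,C')=\phi^{-1}\circ\{\rho\in\Gamma_\gamma:\rho(Q)=Q'\}\circ\phi.$$ In particular $\mathrm{Aut}_k(C)=\phi^{-1}\circ\Gamma_\gamma(Q)\circ\phi$.
   Context: $k=\mathbb{F}_q$, $q$ a power of 2, $\sigma(a)=a^q$ the Frobenius acting coefficientwise. Isomorphisms between non-singular plane quartics are induced by unique elements of $\mathrm{PGL}_3(\overline{k})$; $\mathrm{Isom}_k(C,C')$ (resp. $\mathrm{Aut}_k(C)$) denotes those induced by elements of $\mathrm{PGL}_3(k)$. For a subset $\mathcal{B}$ of lines, $\mathrm{Aut}_k(\mathcal{B})=\{\rho\in\mathrm{PGL}_3(k):\rho(\mathcal{B})=\mathcal{B}\}$. For $\gamma\in\mathrm{PGL}_3(\overline{k})$ with rows $\ell_1,\ell_2,\ell_3$, $F^\gamma=F(\ell_1,\ell_2,\ell_3)$. $\mathcal{Q}$ is the set of quadratic forms $Q=ax^2+by^2+cz^2+dxy+eyz+fzx$ over $\overline{k}$ with $abc\ne0$,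 $a+b+d\ne0$, $b+c+e\ne0$, $a+c+f\ne0$, $a+b+c+d+e+f\ne1$; $C_Q:Q^2=xyz(x+y+z)$. $\Gamma=\mathrm{PGL}_3(\mathbb{F}_2)$; $H_\gamma$ defined by $\ell_1\ell_2\ell_3(\ell_1+\ell_2+\ell_3)=xyz(x+y+z)+H_\gamma^2$; $\gamma(Q)=Q^{\gamma^{-1}}+H_{\gamma^{-1}}$, so $\gamma(C_Q)=C_{\gamma(Q)}$. $\mathcal{D}_\gamma=\{Q\in\mathcal{Q}:\gamma(Q)=\sigma Q\}$. $\Gamma_\gamma$ is the centralizer of $\gamma$ in $\Gamma$ and $\Gamma_\gamma(Q)$ the stabilizer of $Q$ in $\Gamma_\gamma$. Ordinary means Jacobian of 2-rank 3. *)

theory Defs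
  imports "HOL-Analysis.Analysis" "HOL-Computational_Algebra.Polynomial"
begin

text \<open>A field K is (a model of) the algebraic closure of F_2 iff it has characteristic 2,
  is algebraically closed, and every element is algebraic over F_2, i.e. lies in some
  finite field F_(2^n).\<close>

definition is_F2bar :: "'K::field itself \<Rightarrow> bool" where
  "is_F2bar _ \<longleftrightarrow> (2::'K) = 0
     \<and> (\<forall>p::'K poly. degree p > 0 \<longrightarrow> (\<exists>x. poly p x = 0))
     \<and> (\<forall>a::'K. \<exists>n>0. a ^ (2 ^ n) = a)"

definition Fq :: "nat \<Rightarrow> 'K::field set" where
  "Fq q = {a. a ^ q = a}"

type_synonym 'K tform = "nat \<times> nat \<times> nat \<Rightarrow> 'K"

definition exps :: "nat \<Rightarrow> (nat \<times> nat \<times> nat) set" where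
  "exps d = {(a, b, c). a + b + c = d}"

definition mon :: "nat \<times> nat \<times> nat \<Rightarrow> 'K::comm_ring_1^3 \<Rightarrow> 'K" where
  "mon e v = (case e of (a, b, c) \<Rightarrow> (v$1) ^ a * (v$2) ^ b * (v$3) ^ c)"

definition is_form :: "nat \<Rightarrow> 'K::comm_ring_1 tform \<Rightarrow> bool" where
  "is_form d F \<longleftrightarrow> (\<forall>e. F e \<noteq> 0 \<longrightarrow> e \<in> exps d)"

definition feval :: "nat \<Rightarrow> 'K::comm_ring_1 tform \<Rightarrow> 'K^3 \<Rightarrow> 'K" where
  "feval d F v = (\<Sum>e\<in>exps d. F e * mon e v)"

definition dX :: "'K::comm_ring_1 tform \<Rightarrow> 'K tform" where
  "dX F = (\<lambda>(a, b, c). of_nat (a + 1) * F (a + 1, b, c))"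
definition dY :: "'K::comm_ring_1 tform \<Rightarrow> 'K tform" where
  "dY F = (\<lambda>(a, b, c). of_nat (b + 1) * F (a, b + 1, c))"
definition dZ :: "'K::comm_ring_1 tform \<Rightarrow> 'K tform" where
  "dZ F = (\<lambda>(a, b, c). of_nat (c + 1) * F (a, b, c + 1))"

definition nonsing_quartic :: "'K::field tform \<Rightarrow> bool" where
  "nonsing_quartic F \<longleftrightarrow> is_form 4 F \<and> F \<noteq> (\<lambda>_. 0) \<and>
     (\<forall>v::'K^3. v \<noteq> 0 \<longrightarrow>
        \<not> (feval 4 F v = 0 \<and> feval 3 (dX F) v = 0 \<and> feval 3 (dY F) v = 0 \<and> feval 3 (dZ F) v = 0))"

definition defined_over :: "'K::field set \<Rightarrow> 'K tform \<Rightarrow> bool" where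
  "defined_over k F \<longleftrightarrow> (\<forall>e. F e \<in> k)"

text \<open>Ordinary (2-rank of the Jacobian equal to the genus 3): the Hasse--Witt
  (Cartier--Manin) matrix of the quartic is invertible. For a plane quartic F in
  characteristic 2 its entries are the coefficients of F at the monomials 2u_i - u_j,
  where u_1=(2,1,1), u_2=(1,2,1), u_3=(1,1,2) (Stoehr--Voloch).\<close>
definition hw_u :: "3 \<Rightarrow> nat \<times> nat \<times> nat" where
  "hw_u i = (if i = 1 then (2, 1, 1) else if i = 2 then (1, 2, 1) else (1, 1, 2))"

definition hw_exp :: "nat \<times> nat \<times> nat \<Rightarrow> nat \<times> nat \<times> nat \<Rightarrow> nat \<times> nat \<times> nat" where
  "hw_exp u w = (case u of (a, b, c) \<Rightarrow> case w of (a', b', c') \<Rightarrow>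
                  (2 * a - a', 2 * b - b', 2 * c - c'))"

definition hasse_witt :: "'K::field tform \<Rightarrow> 'K^3^3" where
  "hasse_witt F = (\<chi> i j. F (hw_exp (hw_u i) (hw_u j)))"

definition ordinary :: "'K::field tform \<Rightarrow> bool" where
  "ordinary F \<longleftrightarrow> det (hasse_witt F) \<noteq> 0"

definition smat :: "'K::field \<Rightarrow> 'K^3^3 \<Rightarrow> 'K^3^3" where
  "smat c A = (\<chi> i j. c * A$i$j)"

definition pgl_eq :: "'K::field^3^3 \<Rightarrow> 'K^3^3 \<Rightarrow> bool" where
  "pgl_eq A B \<longleftrightarrow> (\<exists>c. c \<noteq> 0 \<and> A = smat c B)"

definition in_PGL3 :: "'K::field set \<Rightarrow> 'K^3^3 \<Rightarrow> bool" where
  "in_PGL3 k A \<longleftrightarrow> invertible A \<and> (\<exists>c. c \<noteq> 0 \<and> (\<forall>i j. c * A$i$j \<in> k))"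

definition frob_mat :: "nat \<Rightarrow> 'K::field^3^3 \<Rightarrow> 'K^3^3" where
  "frob_mat q A = (\<chi> i j. (A$i$j) ^ q)"

text \<open>The matrix A maps the curve f = 0 onto the curve f' = 0 (as projective plane
  curves), i.e. f'^A is a nonzero multiple of f. Curves are given by their defining
  homogeneous polynomial functions.\<close>
definition maps_curve :: "'K::field^3^3 \<Rightarrow> ('K^3 \<Rightarrow> 'K) \<Rightarrow> ('K^3 \<Rightarrow> 'K) \<Rightarrow> bool" where
  "maps_curve A f f' \<longleftrightarrow> invertible A \<and> (\<exists>c. c \<noteq> 0 \<and> (\<forall>v. f' (A *v v) = c * f v))"

text \<open>Gamma = PGL_3(F_2): invertible matrices with entries in F_2 = {0,1}
  (scalars in F_2 are trivial, so these are exactly the elements).\<close>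
definition Gamma :: "('K::field^3^3) set" where
  "Gamma = {G. invertible G \<and> (\<forall>i j. G$i$j = 0 \<or> G$i$j = 1)}"

definition centralizer :: "'K::field^3^3 \<Rightarrow> ('K^3^3) set" where
  "centralizer G = {R \<in> Gamma. R ** G = G ** R}"

datatype 'K qform = QF (qa: 'K) (qb: 'K) (qc: 'K) (qd: 'K) (qe: 'K) (qf: 'K)

definition qeval :: "'K::comm_ring_1 qform \<Rightarrow> 'K^3 \<Rightarrow> 'K" where
  "qeval Q v = qa Q * (v$1)^2 + qb Q * (v$2)^2 + qc Q * (v$3)^2
             + qd Q * (v$1) * (v$2) + qe Q * (v$2) * (v$3) + qf Q * (v$3) * (v$1)"

definition QQ :: "'K::field qform set" where
  "QQ = {Q. qa Q * qb Q * qc Q \<noteq> 0 \<and> qa Q + qb Q + qd Q \<noteq> 0 \<and> qb Q + qc Q + qe Q \<noteq> 0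
          \<and> qa Q + qc Q + qf Q \<noteq> 0 \<and> qa Q + qb Q + qc Q + qd Q + qe Q + qf Q \<noteq> 1}"

definition CQ :: "'K::field qform \<Rightarrow> 'K^3 \<Rightarrow> 'K" where
  "CQ Q v = (qeval Q v)^2 - (v$1) * (v$2) * (v$3) * (v$1 + v$2 + v$3)"

definition Hq :: "'K::field^3^3 \<Rightarrow> 'K qform" where
  "Hq G = (THE H. \<forall>v. let w = G *v v in
              (w$1) * (w$2) * (w$3) * (w$1 + w$2 + w$3)
              = (v$1) * (v$2) * (v$3) * (v$1 + v$2 + v$3) + (qeval H v)^2)"

definition gact :: "'K::field^3^3 \<Rightarrow> 'K qform \<Rightarrow> 'K qform" where
  "gact G Q = (THE Q'. \<forall>v. qeval Q' v
                = qeval Q (matrix_inv G *v v) + qeval (Hq (matrix_inv G)) v)"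

definition frob_q :: "nat \<Rightarrow> 'K::field qform \<Rightarrow> 'K qform" where
  "frob_q q Q = QF (qa Q ^ q) (qb Q ^ q) (qc Q ^ q) (qd Q ^ q) (qe Q ^ q) (qf Q ^ q)"

definition DD :: "nat \<Rightarrow> 'K::field^3^3 \<Rightarrow> 'K qform set" where
  "DD q G = {Q \<in> QQ. gact G Q = frob_q q Q}"

definition ldot :: "'K::comm_ring_1^3 \<Rightarrow> 'K^3 \<Rightarrow> 'K" where
  "ldot a v = (\<Sum>i\<in>UNIV. a$i * v$i)"

text \<open>The line a = 0 (a nonzero) is a bitangent of F = 0: the restriction of F to the
  line is the square of a binary quadratic form (intersection divisor 2D).\<close>
definition is_bitangent :: "'K::field tform \<Rightarrow> 'K^3 \<Rightarrow> bool" where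
  "is_bitangent F a \<longleftrightarrow> a \<noteq> 0 \<and>
     (\<exists>u w. ldot a u = 0 \<and> ldot a w = 0 \<and> \<not> (\<exists>c. u = c *s w) \<and> w \<noteq> 0 \<and>
        (\<exists>\<alpha> \<beta> \<gamma>. \<forall>s t. feval 4 F (s *s u + t *s w) = (\<alpha> * s^2 + \<beta> * s * t + \<gamma> * t^2)^2))"

text \<open>Lines as point sets (in the affine cone K^3).\<close>
definition bitangents :: "'K::field tform \<Rightarrow> ('K^3) set set" where
  "bitangents F = {{v. ldot a v = 0} | a. is_bitangent F a}"

definition image_lines :: "'K::field^3^3 \<Rightarrow> ('K^3) set set \<Rightarrow> ('K^3) set set" where
  "image_lines A B = (\<lambda>L. (\<lambda>v. A *v v) ` L) ` B"

definition Aut_lines :: "'K::field set \<Rightarrow> ('K^3) set set \<Rightarrow> ('K^3^3) set" where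
  "Aut_lines k B = {R. in_PGL3 k R \<and> image_lines R B = B}"

end

theory Submission
  imports Defs
begin

text \<open>In characteristic two the quartic \<open>Q\<^sup>2 - xyz(x + y + z)\<close> differs from \<open>xyz(x + y + z)\<close> by a
  square, so the bitangents of \<open>C\<^sub>Q\<close> are the lines on which \<open>xyz(x + y + z)\<close> restricts to a square:
  exactly the seven \<open>F\<^sub>2\<close>-lines, whatever \<open>Q\<close> is. Hence \<open>\<phi>\<close> carries the bitangents of \<open>C\<close> onto the
  seven \<open>F\<^sub>2\<close>-lines, whose stabiliser in \<open>PGL\<^sub>3\<close> is \<open>\<Gamma> = PGL\<^sub>3(F\<^sub>2)\<close>. For \<open>S \<in> \<Gamma>\<close> the Frobenius
  conjugate of \<open>\<phi>\<inverse> S \<phi>\<close> is \<open>\<phi>\<inverse> \<gamma>\<inverse> S \<gamma> \<phi>\<close>, so \<open>\<phi>\<inverse> S \<phi>\<close> is defined over \<open>k\<close> iff \<open>\<gamma>\<inverse> S \<gamma>\<close> and \<open>S\<close>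
  agree up to a scalar, i.e. (as \<open>\<Gamma>\<close> has no nontrivial scalars) iff \<open>S\<close> commutes with \<open>\<gamma>\<close>. Finally
  \<open>S\<close> maps \<open>C\<^sub>Q\<close> onto \<open>C\<^bsub>S(Q)\<^esub>\<close> and \<open>C\<^sub>Q\<close> determines \<open>Q\<close>; as an isomorphism \<open>C \<rightarrow> C'\<close> preserves the
  common bitangent configuration, this describes \<open>Isom\<^sub>k(C, C')\<close>.\<close>

section \<open>Fields of characteristic two\<close>

lemma char2_add_self:
  assumes "(2::'K::field) = 0" shows "(a::'K) + a = 0"
  by (metis assms mult_2 mult_zero_left)

lemma char2_minus:
  assumes "(2::'K::field) = 0" shows "- (a::'K) = a"
  by (rule minus_unique[OF char2_add_self[OF assms]])

lemma char2_diff: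
  assumes "(2::'K::field) = 0" shows "(a::'K) - b = a + b"
  by (simp add: char2_minus[OF assms])

lemma char2_eq_iff_add_eq_0:
  assumes "(2::'K::field) = 0" shows "(a::'K) = b \<longleftrightarrow> a + b = 0"
  by (metis add_eq_0_iff char2_minus[OF assms])

lemma char2_power2_add:
  assumes "(2::'K::field) = 0" shows "((x::'K) + y)^2 = x^2 + y^2"
  by (simp add: power2_sum assms)

lemma char2_power2_inj:
  assumes "(2::'K::field) = 0" and "(x::'K)^2 = y^2" shows "x = y"
  using assms by (metis char2_power2_add char2_add_self char2_eq_iff_add_eq_0 zero_eq_power2)

lemma char2_power_two_power_add:
  assumes "(2::'K::field) = 0" shows "((x::'K) + y) ^ 2^n = x ^ 2^n + y ^ 2^n"
proof (induction n)
  case (Suc n)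
  then show ?case
    by (simp add: power_Suc2 power_mult char2_power2_add[OF assms] del: power_Suc)
qed simp

lemma char2_add_cancel_left:
  assumes "(2::'K::field) = 0" shows "(a::'K) + (a + b) = b"
  by (simp add: char2_add_self[OF assms] flip: add.assoc)

lemma char2_numeral_Bit0:
  assumes "(2::'K::field) = 0" shows "(numeral (Num.Bit0 n) :: 'K) = 0"
  by (simp only: numeral_Bit0 char2_add_self[OF assms])

lemma char2_numeral_Bit1:
  assumes "(2::'K::field) = 0" shows "(numeral (Num.Bit1 n) :: 'K) = 1"
  by (simp only: numeral_Bit1 char2_add_self[OF assms] add_0_left)

lemma char2_square_trinomial:
  assumes "(2::'K::field) = 0"
  shows "((a::'K) + b + c)^2 = a^2 + b^2 + c^2"
  by (simp add: char2_power2_add[OF assms])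

lemma char2_mult_add_one_eq_0_iff:
  assumes "(2::'K::field) = 0" shows "(x::'K) * (1 + x) = 0 \<longleftrightarrow> x \<in> {0, 1}"
  using char2_eq_iff_add_eq_0[OF assms, of 1 x] by (auto simp: add.commute)

lemma power2_eq_self_iff: "(x::'K::field)^2 = x \<longleftrightarrow> x \<in> {0, 1}"
  using mult_cancel_left[of x x 1] by (auto simp: power2_eq_square)

lemma char2_add_mem_01:
  assumes "(2::'K::field) = 0" "(x::'K) \<in> {0, 1}" "y \<in> {0, 1}" shows "x + y \<in> {0, 1}"
  using assms char2_add_self[OF assms(1), of 1] by auto

lemma mult_mem_01: "(x::'K::field) \<in> {0, 1} \<Longrightarrow> y \<in> {0, 1} \<Longrightarrow> x * y \<in> {0, 1}"
  by auto

lemma F2bar_char2: "is_F2bar TYPE('K::field) \<Longrightarrow> (2::'K) = 0"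
  unfolding is_F2bar_def by blast

lemma F2bar_sqrt:
  assumes "is_F2bar TYPE('K::field)" shows "\<forall>a::'K. \<exists>b. b^2 = a"
proof
  fix a :: 'K
  obtain n where "n > 0" "a ^ 2^n = a" using assms unfolding is_F2bar_def by blast
  moreover have "(2::nat)^n = 2^(n - 1) * 2" using \<open>n > 0\<close> by (cases n) simp_all
  ultimately have "(a ^ 2^(n - 1))^2 = a" by (simp add: power_mult)
  then show "\<exists>b. b^2 = a" by blast
qed

lemma F2bar_cube_root_of_unity:
  assumes "is_F2bar TYPE('K::field)" shows "\<exists>\<omega>::'K. \<omega>^2 + \<omega> + 1 = 0"
proof -
  have "degree [:(1::'K), 1, 1:] > 0" by simp
  then obtain x where "poly [:(1::'K), 1, 1:] x = 0" using assms unfolding is_F2bar_def by blast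
  then have "x^2 + x + 1 = 0" by (simp add: algebra_simps power2_eq_square)
  then show ?thesis by blast
qed

section \<open>Binary quartics that are squares\<close>

lemma quadratic_three_roots_eq_0:
  fixes A B C r1 r2 r3 :: "'K::field"
  assumes "r1 \<noteq> r2" "r1 \<noteq> r3" "r2 \<noteq> r3"
    and "A*r1^2 + B*r1 + C = 0" "A*r2^2 + B*r2 + C = 0" "A*r3^2 + B*r3 + C = 0"
  shows "A = 0 \<and> B = 0 \<and> C = 0"
proof -
  have "(r1 - r2) * (A*(r1 + r2) + B) = (A*r1^2 + B*r1 + C) - (A*r2^2 + B*r2 + C)"
    and "(r1 - r3) * (A*(r1 + r3) + B) = (A*r1^2 + B*r1 + C) - (A*r3^2 + B*r3 + C)"
    by (simp_all add: algebra_simps power2_eq_square)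
  then have "(r1 - r2) * (A*(r1 + r2) + B) = 0" "(r1 - r3) * (A*(r1 + r3) + B) = 0"
    using assms(4-6) by simp_all
  then have "A*(r1 + r2) + B = 0" "A*(r1 + r3) + B = 0"
    using assms(1,2) by simp_all
  moreover have "A * (r2 - r3) = (A*(r1 + r2) + B) - (A*(r1 + r3) + B)"
    by (simp add: algebra_simps)
  ultimately have "A * (r2 - r3) = 0" by simp
  then have "A = 0" using assms(3) by simp
  then show ?thesis using \<open>A*(r1 + r2) + B = 0\<close> assms(4) by simp
qed

text \<open>The cube root of unity \<open>\<omega>\<close> supplies the three distinct nonzero roots \<open>1, \<omega>, \<omega> + 1\<close> needed to
  kill the odd coefficients; over \<open>F\<^sub>2\<close> itself the statement is false.\<close>

lemma binary_quartic_square_iff: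
  fixes h4 h3 h2 h1 h0 \<omega> :: "'K::field"
  assumes two: "(2::'K) = 0" and \<omega>: "\<omega>^2 + \<omega> + 1 = 0" and sqrt: "\<forall>a::'K. \<exists>b. b^2 = a"
  shows "(\<exists>\<alpha> \<beta> \<gamma>. \<forall>s t. h4 * s^4 + h3 * s^3 * t + h2 * s^2 * t^2 + h1 * s * t^3 + h0 * t^4
                      = (\<alpha> * s^2 + \<beta> * s * t + \<gamma> * t^2)^2)
         \<longleftrightarrow> h3 = 0 \<and> h1 = 0"
    (is "(\<exists>\<alpha> \<beta> \<gamma>. \<forall>s t. ?f s t = ?sq \<alpha> \<beta> \<gamma> s t) \<longleftrightarrow> _")
proof -
  have expand: "?sq \<alpha> \<beta> \<gamma> s t = \<alpha>^2 * s^4 + \<beta>^2 * s^2 * t^2 + \<gamma>^2 * t^4" for \<alpha> \<beta> \<gamma> s t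
    by (simp add: char2_square_trinomial[OF two] power_mult_distrib flip: power_mult)
  show ?thesis
  proof
    assume "\<exists>\<alpha> \<beta> \<gamma>. \<forall>s t. ?f s t = ?sq \<alpha> \<beta> \<gamma> s t"
    then obtain \<alpha> \<beta> \<gamma> where eq: "\<And>s t. ?f s t = \<alpha>^2 * s^4 + \<beta>^2 * s^2 * t^2 + \<gamma>^2 * t^4"
      unfolding expand by blast
    have h4: "h4 = \<alpha>^2" and h0: "h0 = \<gamma>^2" using eq[of 1 0] eq[of 0 1] by simp_all
    have root: "h3 * s^2 + (h2 - \<beta>^2) * s + h1 = 0" if "s \<noteq> 0" for s
    proof -
      have "s * (h3 * s^2 + (h2 - \<beta>^2) * s + h1) = 0"
        using eq[of s 1] h4 h0
        by (simp add: algebra_simps power2_eq_square power3_eq_cube power4_eq_xxxx)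
      then show ?thesis using that by simp
    qed
    have "\<omega> \<noteq> 0" using \<omega> by auto
    moreover have "\<omega> \<noteq> 1" using \<omega> char2_add_self[OF two, of 1] by auto
    moreover from this have "\<omega> + 1 \<noteq> 0" using char2_eq_iff_add_eq_0[OF two] by blast
    ultimately have "h3 = 0 \<and> h2 - \<beta>^2 = 0 \<and> h1 = 0"
      by (intro quadratic_three_roots_eq_0[of 1 \<omega> "\<omega> + 1"] root) (auto simp: add_eq_0_iff)
    then show "h3 = 0 \<and> h1 = 0" by simp
  next
    assume "h3 = 0 \<and> h1 = 0"
    moreover obtain \<alpha> \<beta> \<gamma> where "\<alpha>^2 = h4" "\<beta>^2 = h2" "\<gamma>^2 = h0" using sqrt by metis
    ultimately have "\<forall>s t. ?f s t = ?sq \<alpha> \<beta> \<gamma> s t" unfolding expand by simp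
    then show "\<exists>\<alpha> \<beta> \<gamma>. \<forall>s t. ?f s t = ?sq \<alpha> \<beta> \<gamma> s t" by blast
  qed
qed

definition square_on :: "('K::field^3 \<Rightarrow> 'K) \<Rightarrow> 'K^3 \<Rightarrow> 'K^3 \<Rightarrow> bool" where
  "square_on f u w \<longleftrightarrow>
     (\<exists>\<alpha> \<beta> \<gamma>. \<forall>s t. f (s *s u + t *s w) = (\<alpha> * s^2 + \<beta> * s * t + \<gamma> * t^2)^2)"

lemma square_on_reparam:
  assumes "square_on f u w"
  shows "square_on f (p *s u + q *s w) (r *s u + k *s w)"
proof -
  obtain \<alpha> \<beta> \<gamma> where sq: "\<And>s t. f (s *s u + t *s w) = (\<alpha> * s^2 + \<beta> * s * t + \<gamma> * t^2)^2"
    using assms unfolding square_on_def by blast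
  have "f (s *s (p *s u + q *s w) + t *s (r *s u + k *s w))
        = ((\<alpha>*p^2 + \<beta>*p*q + \<gamma>*q^2) * s^2 + (2*\<alpha>*p*r + \<beta>*(p*k + q*r) + 2*\<gamma>*q*k) * s * t
           + (\<alpha>*r^2 + \<beta>*r*k + \<gamma>*k^2) * t^2)^2" for s t
  proof -
    have "s *s (p *s u + q *s w) + t *s (r *s u + k *s w) = (s*p + t*r) *s u + (s*q + t*k) *s w"
      by (simp add: vec_eq_iff algebra_simps)
    moreover have "\<alpha> * (s*p + t*r)^2 + \<beta> * (s*p + t*r) * (s*q + t*k) + \<gamma> * (s*q + t*k)^2
        = (\<alpha>*p^2 + \<beta>*p*q + \<gamma>*q^2) * s^2 + (2*\<alpha>*p*r + \<beta>*(p*k + q*r) + 2*\<gamma>*q*k) * s * t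
          + (\<alpha>*r^2 + \<beta>*r*k + \<gamma>*k^2) * t^2"
      by algebra
    ultimately show ?thesis by (simp only: sq)
  qed
  then show ?thesis unfolding square_on_def by blast
qed

lemma square_on_linear_image:
  fixes A :: "'K::field^3^3"
  assumes "\<And>v. f' (A *v v) = d^2 * f v" and "square_on f u w"
  shows "square_on f' (A *v u) (A *v w)"
proof -
  obtain \<alpha> \<beta> \<gamma> where sq: "\<And>s t. f (s *s u + t *s w) = (\<alpha> * s^2 + \<beta> * s * t + \<gamma> * t^2)^2"
    using assms(2) unfolding square_on_def by blast
  have "f' (s *s (A *v u) + t *s (A *v w)) = ((d*\<alpha>) * s^2 + (d*\<beta>) * s * t + (d*\<gamma>) * t^2)^2" for s t
    using assms(1)[of "s *s u + t *s w"]
    by (simp add: sq matrix_vector_right_distrib vector_scalar_commute algebra_simps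
        power2_eq_square)
  then show ?thesis unfolding square_on_def by blast
qed

lemma square_on_iff_odd_coeffs_eq_0:
  fixes f :: "'K::field^3 \<Rightarrow> 'K" and \<omega> :: 'K
  assumes "(2::'K) = 0" "\<omega>^2 + \<omega> + 1 = 0" "\<forall>a::'K. \<exists>b. b^2 = a"
    and "\<And>s t. f (s *s u + t *s w)
               = h4 * s^4 + h3 * s^3 * t + h2 * s^2 * t^2 + h1 * s * t^3 + h0 * t^4"
  shows "square_on f u w \<longleftrightarrow> h3 = 0 \<and> h1 = 0"
  unfolding square_on_def assms(4) using binary_quartic_square_iff[OF assms(1-3)] by simp

lemma qeval_on_line:
  "qeval Q (s *s u + t *s w)
     = qeval Q u * s^2 + (qeval Q (u + w) - qeval Q u - qeval Q w) * s * t + qeval Q w * t^2"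
  unfolding qeval_def by (simp add: algebra_simps power2_eq_square)

lemma square_on_add_qeval_square:
  assumes two: "(2::'K::field) = 0"
  shows "square_on (\<lambda>v. f v + (qeval (Q::'K qform) v)^2) u w \<longleftrightarrow> square_on f u w"
proof -
  have add: "square_on (\<lambda>v. g v + (qeval Q v)^2) u w" if g: "square_on g u w" for g
  proof -
    obtain \<alpha> \<beta> \<gamma> where sq: "\<And>s t. g (s *s u + t *s w) = (\<alpha> * s^2 + \<beta> * s * t + \<gamma> * t^2)^2"
      using g unfolding square_on_def by blast
    define a b c where "a = qeval Q u" and "b = qeval Q (u + w) - qeval Q u - qeval Q w"
      and "c = qeval Q w"
    have "g (s *s u + t *s w) + (qeval Q (s *s u + t *s w))^2
          = ((\<alpha> + a) * s^2 + (\<beta> + b) * s * t + (\<gamma> + c) * t^2)^2" for s t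
    proof -
      have "g (s *s u + t *s w) + (qeval Q (s *s u + t *s w))^2
            = (\<alpha> * s^2 + \<beta> * s * t + \<gamma> * t^2)^2 + (a * s^2 + b * s * t + c * t^2)^2"
        unfolding sq qeval_on_line a_def b_def c_def ..
      also have "\<dots> = ((\<alpha> * s^2 + \<beta> * s * t + \<gamma> * t^2) + (a * s^2 + b * s * t + c * t^2))^2"
        by (rule char2_power2_add[OF two, symmetric])
      finally show ?thesis by (simp add: algebra_simps)
    qed
    then show ?thesis unfolding square_on_def by blast
  qed
  have "(\<lambda>v. f v + (qeval Q v)^2 + (qeval Q v)^2) = f"
    by (simp add: add.assoc char2_add_self[OF two])
  then show ?thesis using add[of f] add[of "\<lambda>v. f v + (qeval Q v)^2"] by auto
qed

section \<open>Matrices up to scalars\<close>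

lemma vec3_eq_iff: "(u::'a^3) = v \<longleftrightarrow> u$1 = v$1 \<and> u$2 = v$2 \<and> u$3 = v$3"
  by (simp add: vec_eq_iff forall_3)

lemma vec3_eq_0_iff: "(u::'a::zero^3) = 0 \<longleftrightarrow> u$1 = 0 \<and> u$2 = 0 \<and> u$3 = 0"
  by (simp add: vec3_eq_iff)

lemma matrix_inv_right: "invertible (A::'K::field^'n^'n) \<Longrightarrow> A ** matrix_inv A = mat 1"
  and matrix_inv_left: "invertible (A::'K::field^'n^'n) \<Longrightarrow> matrix_inv A ** A = mat 1"
  unfolding invertible_def matrix_inv_def by (metis (mono_tags, lifting) someI_ex)+

lemma matrix_inv_unique:
  fixes A B :: "'K::field^'n^'n"
  assumes "A ** B = mat 1"
  shows "matrix_inv A = B"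
proof -
  have "invertible A" using assms matrix_left_right_inverse invertible_def by blast
  then have "matrix_inv A = (matrix_inv A ** A) ** B"
    by (simp add: assms matrix_mul_assoc flip: matrix_mul_assoc)
  then show ?thesis by (simp add: matrix_inv_left[OF \<open>invertible A\<close>])
qed

lemma invertible_matrix_inv: "invertible (A::'K::field^'n^'n) \<Longrightarrow> invertible (matrix_inv A)"
  unfolding invertible_def using matrix_inv_left matrix_inv_right invertible_def by blast

lemma matrix_inv_matrix_inv: "invertible (A::'K::field^'n^'n) \<Longrightarrow> matrix_inv (matrix_inv A) = A"
  by (rule matrix_inv_unique[OF matrix_inv_left])

lemma matrix_inv_cancel_vector:
  assumes "invertible (A::'K::field^'n^'n)"
  shows "A *v (matrix_inv A *v x) = x" "matrix_inv A *v (A *v x) = x"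
  by (simp_all add: matrix_vector_mul_assoc matrix_inv_left[OF assms] matrix_inv_right[OF assms])

lemma matrix_inv_cancel:
  assumes "invertible (A::'K::field^'n^'n)"
  shows "X ** matrix_inv A ** A = X" "X ** A ** matrix_inv A = X"
    "A ** (matrix_inv A ** X) = X" "matrix_inv A ** (A ** X) = X"
  by (simp_all add: matrix_inv_left[OF assms] matrix_inv_right[OF assms] flip: matrix_mul_assoc)
    (simp_all add: matrix_inv_left[OF assms] matrix_inv_right[OF assms] matrix_mul_assoc)

lemma invertible_transpose: "invertible (A::'K::field^'n^'n) \<Longrightarrow> invertible (transpose A)"
  by (simp add: invertible_det_nz)

lemma matrix_inv_mult:
  fixes A B :: "'K::field^'n^'n"
  assumes "invertible A" "invertible B"
  shows "matrix_inv (A ** B) = matrix_inv B ** matrix_inv A"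
  by (rule matrix_inv_unique)
     (simp add: matrix_mul_assoc matrix_inv_cancel(2)[OF assms(2)] matrix_inv_right[OF assms(1)])

lemma matrix_vector_mult_3:
  "((A::'K::field^3^3) *v v)$i = A$i$1 * v$1 + A$i$2 * v$2 + A$i$3 * v$3"
  by (simp add: matrix_vector_mult_def sum_3)

lemma matrix_vector_mult_vector_3:
  "(A::'K::field^3^3) *v vector [x, y, z]
     = vector [A$1$1 * x + A$1$2 * y + A$1$3 * z, A$2$1 * x + A$2$2 * y + A$2$3 * z,
               A$3$1 * x + A$3$2 * y + A$3$3 * z]"
  by (simp add: vec3_eq_iff matrix_vector_mult_3)

lemma matrix_matrix_mult_3:
  "((A::'K::field^3^3) ** B)$i$j = A$i$1 * B$1$j + A$i$2 * B$2$j + A$i$3 * B$3$j"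
  by (simp add: matrix_matrix_mult_def sum_3)

lemma nonzero_if_invertible: "invertible (A::'K::field^3^3) \<Longrightarrow> A \<noteq> 0"
  using invertible_det_nz[of A] by (auto simp: det_3)

lemma nonzero_entry_if_invertible:
  assumes "invertible (A::'K::field^3^3)" obtains i j where "A$i$j \<noteq> 0"
  using nonzero_if_invertible[OF assms] that by (auto simp: vec_eq_iff)

lemma conj_eq_iff_commute:
  assumes "invertible (G::'K::field^3^3)"
  shows "matrix_inv G ** S ** G = S \<longleftrightarrow> S ** G = G ** S"
proof
  assume "matrix_inv G ** S ** G = S"
  moreover have "G ** (matrix_inv G ** S ** G) = S ** G"
    by (simp add: matrix_mul_assoc matrix_inv_right[OF assms])
  ultimately show "S ** G = G ** S" by simp
next
  assume "S ** G = G ** S"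
  then have "matrix_inv G ** S ** G = matrix_inv G ** (G ** S)" by (simp flip: matrix_mul_assoc)
  then show "matrix_inv G ** S ** G = S" by (simp only: matrix_inv_cancel(4)[OF assms])
qed

lemma smat_entry [simp]: "smat c A $ i $ j = c * A$i$j"
  by (simp add: smat_def)

lemma smat_mult_left: "smat c (A::'K::field^3^3) ** B = smat c (A ** B)"
  and smat_mult_right: "(A::'K::field^3^3) ** smat c B = smat c (A ** B)"
  by (simp_all add: vec_eq_iff matrix_matrix_mult_3 algebra_simps)

lemma smat_smat: "smat a (smat b (A::'K::field^3^3)) = smat (a * b) A"
  and smat_1: "smat 1 (A::'K::field^3^3) = A"
  by (simp_all add: vec_eq_iff)

lemma smat_matrix_vector_mult: "smat c (A::'K::field^3^3) *v v = c *s (A *v v)"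
  by (simp add: vec_eq_iff matrix_vector_mult_3 algebra_simps)

lemma invertible_smat:
  assumes "(c::'K::field) \<noteq> 0" "invertible (A::'K^3^3)"
  shows "invertible (smat c A)"
  unfolding invertible_def
  by (intro exI[of _ "smat (inverse c) (matrix_inv A)"])
    (simp add: assms smat_mult_left smat_mult_right smat_smat smat_1 matrix_inv_right
      matrix_inv_left)

lemma matrix_inv_smat:
  assumes "(c::'K::field) \<noteq> 0" "invertible (A::'K^3^3)"
  shows "matrix_inv (smat c A) = smat (inverse c) (matrix_inv A)"
  by (rule matrix_inv_unique)
    (simp add: assms smat_mult_left smat_mult_right smat_smat matrix_inv_right smat_1)

lemma pgl_eqI: "c \<noteq> 0 \<Longrightarrow> A = smat c B \<Longrightarrow> pgl_eq A B"
  unfolding pgl_eq_def by blast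

lemma pgl_eq_refl: "pgl_eq (A::'K::field^3^3) A"
  unfolding pgl_eq_def by (intro exI[of _ 1]) (simp add: smat_1)

lemma pgl_eq_sym:
  assumes "pgl_eq (A::'K::field^3^3) B" shows "pgl_eq B A"
proof -
  obtain c where "c \<noteq> 0" "A = smat c B" using assms unfolding pgl_eq_def by blast
  then have "B = smat (inverse c) A" by (simp add: smat_smat smat_1)
  then show ?thesis using \<open>c \<noteq> 0\<close> by (intro pgl_eqI[of "inverse c"]) simp_all
qed

lemma pgl_eq_trans:
  assumes "pgl_eq (A::'K::field^3^3) B" "pgl_eq B C" shows "pgl_eq A C"
proof -
  obtain c d where "c \<noteq> 0" "A = smat c B" "d \<noteq> 0" "B = smat d C"
    using assms unfolding pgl_eq_def by blast
  then show ?thesis by (intro pgl_eqI[of "c * d"]) (simp_all add: smat_smat)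
qed

lemma pgl_eq_cong_iff:
  assumes "pgl_eq A A'" "pgl_eq (B::'K::field^3^3) B'"
  shows "pgl_eq A B \<longleftrightarrow> pgl_eq A' B'"
proof
  assume "pgl_eq A B"
  show "pgl_eq A' B'"
    using pgl_eq_trans[OF pgl_eq_trans[OF pgl_eq_sym[OF assms(1)] \<open>pgl_eq A B\<close>] assms(2)] .
next
  assume "pgl_eq A' B'"
  show "pgl_eq A B"
    using pgl_eq_trans[OF pgl_eq_trans[OF assms(1) \<open>pgl_eq A' B'\<close>] pgl_eq_sym[OF assms(2)]] .
qed

lemma pgl_eq_conj_iff:
  assumes P: "invertible (P::'K::field^3^3)"
  shows "pgl_eq (matrix_inv P ** A ** P) (matrix_inv P ** B ** P) \<longleftrightarrow> pgl_eq A B"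
proof -
  have conj: "P ** (matrix_inv P ** X ** P) ** matrix_inv P = X" for X
    by (simp add: matrix_mul_assoc matrix_inv_cancel[OF P] matrix_inv_right[OF P]
        flip: matrix_mul_assoc)
  have "matrix_inv P ** A ** P = smat c (matrix_inv P ** B ** P) \<longleftrightarrow> A = smat c B" for c
  proof
    assume "matrix_inv P ** A ** P = smat c (matrix_inv P ** B ** P)"
    then have "P ** (matrix_inv P ** A ** P) ** matrix_inv P
               = smat c (P ** (matrix_inv P ** B ** P) ** matrix_inv P)"
      by (simp add: smat_mult_left smat_mult_right)
    then show "A = smat c B" by (simp only: conj)
  qed (simp add: smat_mult_left smat_mult_right)
  then show ?thesis unfolding pgl_eq_def by blast
qed

lemma invertible_if_pgl_eq: "pgl_eq A (B::'K::field^3^3) \<Longrightarrow> invertible B \<Longrightarrow> invertible A"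
  unfolding pgl_eq_def using invertible_smat by blast

section \<open>Lines and bitangents\<close>

lemma ldot3: "ldot a v = a$1 * v$1 + a$2 * v$2 + a$3 * v$3"
  unfolding ldot_def by (simp add: sum_3)

definition line :: "'K::field^3 \<Rightarrow> ('K^3) set" where
  "line a = {v. ldot a v = 0}"

definition indep_pair :: "'K::field^3 \<Rightarrow> 'K^3 \<Rightarrow> bool" where
  "indep_pair u w \<longleftrightarrow> \<not> (\<exists>c. u = c *s w) \<and> w \<noteq> 0"

lemma parallel_if_minors_eq:
  fixes u w :: "'K::field^3"
  assumes "w \<noteq> 0" and "u$1 * w$2 = u$2 * w$1" "u$1 * w$3 = u$3 * w$1" "u$2 * w$3 = u$3 * w$2"
  shows "\<exists>c. u = c *s w"
proof -
  consider "w$1 \<noteq> 0" | "w$2 \<noteq> 0" | "w$3 \<noteq> 0" using assms(1) by (auto simp: vec3_eq_0_iff)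
  then show ?thesis
  proof cases
    case 1
    then show ?thesis
      using assms(2-4) by (intro exI[of _ "u$1 / w$1"]) (simp add: vec3_eq_iff field_simps)
  next
    case 2
    then show ?thesis
      using assms(2-4) by (intro exI[of _ "u$2 / w$2"]) (simp add: vec3_eq_iff field_simps)
  next
    case 3
    then show ?thesis
      using assms(2-4) by (intro exI[of _ "u$3 / w$3"]) (simp add: vec3_eq_iff field_simps)
  qed
qed

lemma indep_pair_minor:
  assumes "indep_pair (u::'K::field^3) w"
  shows "u$1 * w$2 - u$2 * w$1 \<noteq> 0 \<or> u$1 * w$3 - u$3 * w$1 \<noteq> 0 \<or> u$2 * w$3 - u$3 * w$2 \<noteq> 0"
proof (rule ccontr)
  assume "\<not> ?thesis"
  then have "\<exists>c. u = c *s w"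
    using assms by (intro parallel_if_minors_eq) (auto simp: indep_pair_def)
  then show False using assms unfolding indep_pair_def by blast
qed

lemma span_if_minor_nonzero:
  fixes u1 u2 u3 w1 w2 w3 v1 v2 v3 b1 b2 b3 :: "'K::field"
  assumes \<delta>: "u1 * w2 - u2 * w1 \<noteq> 0" and b: "b1 \<noteq> 0 \<or> b2 \<noteq> 0 \<or> b3 \<noteq> 0"
    and bu: "b1 * u1 + b2 * u2 + b3 * u3 = 0"
    and bw: "b1 * w1 + b2 * w2 + b3 * w3 = 0"
    and bv: "b1 * v1 + b2 * v2 + b3 * v3 = 0"
  shows "\<exists>p q. v1 = p * u1 + q * w1 \<and> v2 = p * u2 + q * w2 \<and> v3 = p * u3 + q * w3"
proof -
  define \<delta> where "\<delta> = u1 * w2 - u2 * w1"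
  define p q where "p = (v1 * w2 - v2 * w1) / \<delta>" and "q = (u1 * v2 - u2 * v1) / \<delta>"
  have "\<delta> \<noteq> 0" using \<delta> by (simp add: \<delta>_def)
  then have p: "p * \<delta> = v1 * w2 - v2 * w1" and q: "q * \<delta> = u1 * v2 - u2 * v1"
    by (simp_all add: p_def q_def)
  have "\<delta> * (v1 - (p * u1 + q * w1)) = 0" "\<delta> * (v2 - (p * u2 + q * w2)) = 0"
    using p q \<delta>_def by algebra+
  then have v1: "v1 = p * u1 + q * w1" and v2: "v2 = p * u2 + q * w2"
    using \<open>\<delta> \<noteq> 0\<close> by simp_all
  have "b3 \<noteq> 0"
  proof
    assume "b3 = 0"
    have "b1 * \<delta> = (b1 * u1 + b2 * u2) * w2 - (b1 * w1 + b2 * w2) * u2"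
      and "b2 * \<delta> = (b1 * w1 + b2 * w2) * u1 - (b1 * u1 + b2 * u2) * w1"
      unfolding \<delta>_def by (simp_all add: algebra_simps)
    then have "b1 * \<delta> = 0" "b2 * \<delta> = 0" using bu bw \<open>b3 = 0\<close> by simp_all
    then show False using \<open>\<delta> \<noteq> 0\<close> b \<open>b3 = 0\<close> by simp
  qed
  moreover have "b3 * (v3 - (p * u3 + q * w3))
      = (b1 * v1 + b2 * v2 + b3 * v3) - p * (b1 * u1 + b2 * u2 + b3 * u3)
        - q * (b1 * w1 + b2 * w2 + b3 * w3) - b1 * (v1 - (p * u1 + q * w1))
        - b2 * (v2 - (p * u2 + q * w2))"
    by (simp add: algebra_simps)
  ultimately show ?thesis using bu bw bv v1 v2 by auto
qed

lemma span_of_indep_pair_in_line: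
  fixes b u w v :: "'K::field^3"
  assumes "b \<noteq> 0" and "u \<in> line b" "w \<in> line b" "v \<in> line b" and "indep_pair u w"
  shows "\<exists>p q. v = p *s u + q *s w"
proof -
  have b: "b$1 \<noteq> 0 \<or> b$2 \<noteq> 0 \<or> b$3 \<noteq> 0" using assms(1) by (simp add: vec3_eq_0_iff)
  have l: "b$1 * x$1 + b$2 * x$2 + b$3 * x$3 = 0" if "x \<in> line b" for x
    using that by (simp add: line_def ldot3)
  note l = l[OF assms(2)] l[OF assms(3)] l[OF assms(4)]
  from indep_pair_minor[OF assms(5)] consider
      "u$1 * w$2 - u$2 * w$1 \<noteq> 0" | "u$1 * w$3 - u$3 * w$1 \<noteq> 0" | "u$2 * w$3 - u$3 * w$2 \<noteq> 0"
    by blast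
  then have "\<exists>p q. v$1 = p * u$1 + q * w$1 \<and> v$2 = p * u$2 + q * w$2 \<and> v$3 = p * u$3 + q * w$3"
  proof cases
    case 1
    then show ?thesis using span_if_minor_nonzero[OF 1 b l] by blast
  next
    case 2
    have "b$1 \<noteq> 0 \<or> b$3 \<noteq> 0 \<or> b$2 \<noteq> 0" using b by blast
    then show ?thesis
      using span_if_minor_nonzero[OF 2, of "b$1" "b$3" "b$2" "u$2" "w$2" "v$1" "v$3" "v$2"] l
      by (auto simp: algebra_simps)
  next
    case 3
    have "b$2 \<noteq> 0 \<or> b$3 \<noteq> 0 \<or> b$1 \<noteq> 0" using b by blast
    then show ?thesis
      using span_if_minor_nonzero[OF 3, of "b$2" "b$3" "b$1" "u$1" "w$1" "v$2" "v$3" "v$1"] l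
      by (auto simp: algebra_simps)
  qed
  then show ?thesis by (simp add: vec3_eq_iff)
qed

lemma square_on_same_line:
  assumes "b \<noteq> 0" and "u \<in> line b" "w \<in> line b" "u' \<in> line b" "w' \<in> line b"
    and "indep_pair u w" and "square_on f u w"
  shows "square_on f u' w'"
proof -
  obtain p q r k where "u' = p *s u + q *s w" "w' = r *s u + k *s w"
    using span_of_indep_pair_in_line assms(1-6) by metis
  then show ?thesis using square_on_reparam[OF assms(7)] by simp
qed

lemma parallel_if_line_eq:
  fixes a b :: "'K::field^3"
  assumes "b \<noteq> 0" and "line a = line b"
  shows "\<exists>k. a = k *s b"
proof -
  have "ldot a v = 0" if "ldot b v = 0" for v
    using assms(2) that unfolding line_def by blast
  from this[of "vector [b$2, - b$1, 0]"] this[of "vector [b$3, 0, - b$1]"]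
    this[of "vector [0, b$3, - b$2]"]
  show ?thesis
    by (intro parallel_if_minors_eq[OF assms(1)]) (simp_all add: ldot3 algebra_simps)
qed

lemma ldot_matrix_vector_mult: "ldot a ((A::'K::field^3^3) *v v) = ldot (a v* A) v"
  unfolding ldot3 matrix_vector_mult_3 by (simp add: vector_matrix_mult_def sum_3 algebra_simps)

lemma ldot_scale_left: "ldot (c *s a) v = c * ldot a v"
  and ldot_scale_right: "ldot a (c *s v) = c * ldot a v"
  unfolding ldot3 by (simp_all add: algebra_simps)

lemma line_scale: "(c::'K::field) \<noteq> 0 \<Longrightarrow> line (c *s a) = line a"
  unfolding line_def by (simp add: ldot_scale_left)

lemma scale_image_line:
  assumes "(d::'K::field) \<noteq> 0" shows "(\<lambda>v. d *s v) ` line a = line a"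
proof
  show "(\<lambda>v. d *s v) ` line a \<subseteq> line a" unfolding line_def by (auto simp: ldot_scale_right)
  show "line a \<subseteq> (\<lambda>v. d *s v) ` line a"
  proof
    fix v assume "v \<in> line a"
    then have "inverse d *s v \<in> line a" unfolding line_def by (simp add: ldot_scale_right)
    moreover have "v = d *s (inverse d *s v)" using assms by simp
    ultimately show "v \<in> (\<lambda>v. d *s v) ` line a" by blast
  qed
qed

lemma image_line:
  assumes "invertible (A::'K::field^3^3)"
  shows "(\<lambda>v. A *v v) ` line a = line (a v* matrix_inv A)"
proof -
  have "x \<in> (\<lambda>v. A *v v) ` line a \<longleftrightarrow> matrix_inv A *v x \<in> line a" for x
    using matrix_inv_cancel_vector[OF assms] by (metis image_iff)
  then show ?thesis unfolding line_def by (auto simp: ldot_matrix_vector_mult)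
qed

lemma image_lines_mult: "image_lines (A ** B) X = image_lines A (image_lines B X)"
  unfolding image_lines_def by (simp add: image_image matrix_vector_mul_assoc[symmetric])

lemma image_lines_mono: "X \<subseteq> Y \<Longrightarrow> image_lines A X \<subseteq> image_lines A Y"
  unfolding image_lines_def by blast

lemma image_lines_matrix_inv:
  assumes "invertible (A::'K::field^3^3)"
  shows "image_lines (matrix_inv A) (image_lines A X) = X"
    "image_lines A (image_lines (matrix_inv A) X) = X"
  by (simp_all add: image_lines_def image_image matrix_inv_cancel_vector[OF assms])

lemma image_lines_conj_eq_iff:
  assumes "invertible (P::'K::field^3^3)"
  shows "image_lines R (image_lines (matrix_inv P) X) = image_lines (matrix_inv P) X
         \<longleftrightarrow> image_lines (P ** R ** matrix_inv P) X = X"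
  using image_lines_matrix_inv[OF assms] by (metis image_lines_mult)

definition bitangent_lines :: "('K::field^3 \<Rightarrow> 'K) \<Rightarrow> ('K^3) set set" where
  "bitangent_lines f = {line a | a. a \<noteq> 0 \<and>
     (\<exists>u w. u \<in> line a \<and> w \<in> line a \<and> indep_pair u w \<and> square_on f u w)}"

lemma bitangents_eq_bitangent_lines: "bitangents F = bitangent_lines (feval 4 F)"
  unfolding bitangents_def is_bitangent_def bitangent_lines_def line_def indep_pair_def
    square_on_def
  by simp

lemma indep_pair_image:
  assumes "invertible (A::'K::field^3^3)" and "indep_pair u w"
  shows "indep_pair (A *v u) (A *v w)"
proof -
  have inj: "A *v x = A *v y \<longleftrightarrow> x = y" for x y
    using inj_matrix_vector_mult[OF assms(1)] by (auto dest: injD)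
  show ?thesis
    using assms(2) inj[of w 0] inj[of u "c *s w" for c]
    unfolding indep_pair_def by (auto simp: vector_scalar_commute)
qed

lemma bitangent_lines_image_subset:
  fixes A :: "'K::field^3^3" and f f' :: "'K^3 \<Rightarrow> 'K"
  assumes sqrt: "\<forall>a::'K. \<exists>b. b^2 = a" and A: "invertible A"
    and f: "\<And>v. f' (A *v v) = c * f v"
  shows "image_lines A (bitangent_lines f) \<subseteq> bitangent_lines f'"
proof
  fix L assume "L \<in> image_lines A (bitangent_lines f)"
  then obtain a u w where L: "L = (\<lambda>v. A *v v) ` line a" and "a \<noteq> 0"
    and uw: "u \<in> line a" "w \<in> line a" "indep_pair u w" "square_on f u w"
    unfolding image_lines_def bitangent_lines_def by blast
  define a' where "a' = a v* matrix_inv A"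
  have a: "a' v* A = a"
    by (simp add: a'_def vector_matrix_mul_assoc matrix_inv_left[OF A])
  then have "a' \<noteq> 0" using \<open>a \<noteq> 0\<close> by auto
  have "L = line a'" unfolding L a'_def by (rule image_line[OF A])
  have "x \<in> line a \<Longrightarrow> A *v x \<in> line a'" for x
    by (simp add: line_def ldot_matrix_vector_mult a)
  moreover obtain d where "d^2 = c" using sqrt by blast
  then have "square_on f' (A *v u) (A *v w)" using square_on_linear_image f uw(4) by metis
  ultimately show "L \<in> bitangent_lines f'"
    unfolding bitangent_lines_def \<open>L = line a'\<close>
    using \<open>a' \<noteq> 0\<close> uw indep_pair_image[OF A uw(3)] by blast
qed

lemma bitangent_lines_image:
  fixes A :: "'K::field^3^3" and f f' :: "'K^3 \<Rightarrow> 'K"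
  assumes sqrt: "\<forall>a::'K. \<exists>b. b^2 = a" and A: "invertible A" and "c \<noteq> 0"
    and f: "\<And>v. f' (A *v v) = c * f v"
  shows "image_lines A (bitangent_lines f) = bitangent_lines f'"
proof
  show "image_lines A (bitangent_lines f) \<subseteq> bitangent_lines f'"
    by (rule bitangent_lines_image_subset[OF sqrt A, where f = f and f' = f']) (rule f)
  have inv: "f (matrix_inv A *v v) = inverse c * f' v" for v
    using f[of "matrix_inv A *v v"] \<open>c \<noteq> 0\<close> by (simp add: matrix_inv_cancel_vector[OF A])
  have "image_lines (matrix_inv A) (bitangent_lines f') \<subseteq> bitangent_lines f"
    by (rule bitangent_lines_image_subset[OF sqrt invertible_matrix_inv[OF A],
          where f = f' and f' = f])
      (rule inv)
  then show "bitangent_lines f' \<subseteq> image_lines A (bitangent_lines f)"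
    using image_lines_mono[of _ _ A] image_lines_matrix_inv(2)[OF A] by metis
qed

section \<open>The seven \<open>F\<^sub>2\<close>-lines and the quartic \<open>xyz(x + y + z)\<close>\<close>

definition four_lines :: "'K::field^3 \<Rightarrow> 'K" where
  "four_lines v = v$1 * v$2 * v$3 * (v$1 + v$2 + v$3)"

definition F2_points :: "('K::field^3) set" where
  "F2_points = {a. a \<noteq> 0 \<and> (\<forall>i. a$i \<in> {0, 1})}"

definition F2_lines :: "('K::field^3) set set" where
  "F2_lines = line ` F2_points"

lemma four_lines_chart_xy:
  "four_lines (s *s vector [1, 0, x] + t *s vector [0, 1, y]) =
     0 * s^4 + (x * (1 + x)) * s^3 * t + (x * (1 + y) + y * (1 + x)) * s^2 * t^2
     + (y * (1 + y)) * s * t^3 + 0 * t^4"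
  unfolding four_lines_def by (simp add: power2_eq_square power3_eq_cube power4_eq_xxxx) algebra

lemma four_lines_chart_x:
  "four_lines (s *s vector [1, x, 0] + t *s vector [0, 0, 1]) =
     0 * s^4 + (x * (1 + x)) * s^3 * t + x * s^2 * t^2 + 0 * s * t^3 + 0 * t^4"
  unfolding four_lines_def by (simp add: power2_eq_square power3_eq_cube power4_eq_xxxx) algebra

lemma four_lines_chart_yz:
  "four_lines (s *s vector [0, 1, 0] + t *s vector [0, 0, 1::'K::field]) =
     0 * s^4 + 0 * s^3 * t + 0 * s^2 * t^2 + 0 * s * t^3 + 0 * t^4"
  unfolding four_lines_def by simp

lemma F2_point_if_square_on_four_lines:
  fixes b :: "'K::field^3" and \<omega> :: 'K
  assumes two: "(2::'K) = 0" and \<omega>: "\<omega>^2 + \<omega> + 1 = 0" and sqrt: "\<forall>a::'K. \<exists>b. b^2 = a"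
    and b: "b \<noteq> 0" and uw: "u \<in> line b" "w \<in> line b" "indep_pair u w" "square_on four_lines u w"
  shows "\<exists>c. \<exists>a \<in> F2_points. b = c *s a"
proof -
  note chart = square_on_iff_odd_coeffs_eq_0[OF two \<omega> sqrt]
  have self: "b$i + b$j * (b$i / b$j) = 0" if "b$j \<noteq> 0" for i j
    using that char2_add_self[OF two] by simp
  consider "b$3 \<noteq> 0" | "b$3 = 0" "b$2 \<noteq> 0" | "b$3 = 0" "b$2 = 0" by blast
  then show ?thesis
  proof cases
    case 1
    define x y where "x = b$1 / b$3" and "y = b$2 / b$3"
    have "vector [1, 0, x] \<in> line b" "vector [0, 1, y] \<in> line b"
      unfolding line_def ldot3 x_def y_def using self[OF 1] by simp_all
    then have "square_on four_lines (vector [1, 0, x]) (vector [0, 1, y])"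
      using square_on_same_line[OF b uw(1,2) _ _ uw(3,4)] by blast
    then have "x \<in> {0, 1} \<and> y \<in> {0, 1}"
      unfolding chart[OF four_lines_chart_xy] char2_mult_add_one_eq_0_iff[OF two] .
    moreover have "b = b$3 *s vector [x, y, 1]" using 1 by (simp add: vec3_eq_iff x_def y_def)
    ultimately show ?thesis unfolding F2_points_def by (force simp: vec3_eq_0_iff forall_3)
  next
    case 2
    define x where "x = b$1 / b$2"
    have "vector [1, x, 0] \<in> line b" "vector [0, 0, 1] \<in> line b"
      unfolding line_def ldot3 x_def using self[OF 2(2)] 2(1) by simp_all
    then have "square_on four_lines (vector [1, x, 0]) (vector [0, 0, 1])"
      using square_on_same_line[OF b uw(1,2) _ _ uw(3,4)] by blast
    then have "x \<in> {0, 1}"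
      unfolding chart[OF four_lines_chart_x] char2_mult_add_one_eq_0_iff[OF two] by simp
    moreover have "b = b$2 *s vector [x, 1, 0]" using 2 by (simp add: vec3_eq_iff x_def)
    ultimately show ?thesis unfolding F2_points_def by (force simp: vec3_eq_0_iff forall_3)
  next
    case 3
    then have "b = b$1 *s vector [1, 0, 0]" by (simp add: vec3_eq_iff)
    then show ?thesis unfolding F2_points_def by (force simp: vec3_eq_0_iff forall_3)
  qed
qed

lemma square_on_four_lines_if_F2_point:
  fixes a :: "'K::field^3" and \<omega> :: 'K
  assumes two: "(2::'K) = 0" and \<omega>: "\<omega>^2 + \<omega> + 1 = 0" and sqrt: "\<forall>a::'K. \<exists>b. b^2 = a"
    and a: "a \<in> F2_points"
  shows "\<exists>u w. u \<in> line a \<and> w \<in> line a \<and> indep_pair u w \<and> square_on four_lines u w"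
proof -
  note chart = square_on_iff_odd_coeffs_eq_0[OF two \<omega> sqrt]
  have a01: "a$i \<in> {0, 1}" for i using a unfolding F2_points_def by blast
  then have odd: "a$i * (1 + a$i) = 0" for i using char2_mult_add_one_eq_0_iff[OF two] by blast
  have self: "a$i + a$i = 0" for i using char2_add_self[OF two] by blast
  consider "a$3 = 1" | "a$3 = 0" "a$2 = 1" | "a$3 = 0" "a$2 = 0" using a01[of 2] a01[of 3] by auto
  then show ?thesis
  proof cases
    case 1
    have "vector [1, 0, a$1] \<in> line a" "vector [0, 1, a$2] \<in> line a"
      unfolding line_def ldot3 using 1 self by simp_all
    moreover have "indep_pair (vector [1, 0, a$1]) (vector [0, 1, a$2])"
      unfolding indep_pair_def by (auto simp: vec3_eq_iff)
    moreover have "square_on four_lines (vector [1, 0, a$1]) (vector [0, 1, a$2])"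
      unfolding chart[OF four_lines_chart_xy] using odd by blast
    ultimately show ?thesis by blast
  next
    case 2
    have "vector [1, a$1, 0] \<in> line a" "vector [0, 0, 1] \<in> line a"
      unfolding line_def ldot3 using 2 self by simp_all
    moreover have "indep_pair (vector [1, a$1, 0]) (vector [0, 0, 1])"
      unfolding indep_pair_def by (auto simp: vec3_eq_iff)
    moreover have "square_on four_lines (vector [1, a$1, 0]) (vector [0, 0, 1])"
      unfolding chart[OF four_lines_chart_x] using odd by blast
    ultimately show ?thesis by blast
  next
    case 3
    have "vector [0, 1, 0] \<in> line a" "vector [0, 0, 1] \<in> line a"
      unfolding line_def ldot3 using 3 by simp_all
    moreover have "indep_pair (vector [0, 1, 0]) (vector [0, 0, 1::'K])"
      unfolding indep_pair_def by (auto simp: vec3_eq_iff)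
    moreover have "square_on four_lines (vector [0, 1, 0]) (vector [0, 0, 1::'K])"
      unfolding chart[OF four_lines_chart_yz] by simp
    ultimately show ?thesis by blast
  qed
qed

lemma bitangent_lines_four_lines:
  fixes \<omega> :: "'K::field"
  assumes "(2::'K) = 0" "\<omega>^2 + \<omega> + 1 = 0" "\<forall>a::'K. \<exists>b. b^2 = a"
  shows "bitangent_lines (four_lines :: 'K^3 \<Rightarrow> 'K) = F2_lines"
proof -
  have "L \<in> bitangent_lines four_lines \<longleftrightarrow> L \<in> F2_lines" for L :: "('K^3) set"
  proof
    assume "L \<in> bitangent_lines four_lines"
    then obtain b u w where "L = line b" "b \<noteq> 0"
      "u \<in> line b" "w \<in> line b" "indep_pair u w" "square_on four_lines u w"
      unfolding bitangent_lines_def by blast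
    moreover from F2_point_if_square_on_four_lines[OF assms this(2-)]
    obtain c a where "a \<in> F2_points" "b = c *s a" by blast
    ultimately show "L \<in> F2_lines" unfolding F2_lines_def using line_scale by force
  next
    assume "L \<in> F2_lines"
    then obtain a where "L = line a" "a \<in> F2_points" unfolding F2_lines_def by blast
    then show "L \<in> bitangent_lines four_lines"
      using square_on_four_lines_if_F2_point[OF assms] unfolding bitangent_lines_def F2_points_def
      by blast
  qed
  then show ?thesis by blast
qed

lemma CQ_char2:
  assumes "(2::'K::field) = 0"
  shows "CQ Q v = four_lines v + (qeval (Q::'K qform) v)^2"
  unfolding CQ_def four_lines_def char2_diff[OF assms] by (simp add: add.commute)

lemma bitangent_lines_CQ:
  fixes \<omega> :: "'K::field"
  assumes "(2::'K) = 0" "\<omega>^2 + \<omega> + 1 = 0" "\<forall>a::'K. \<exists>b. b^2 = a"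
  shows "bitangent_lines (CQ (Q::'K qform)) = F2_lines"
  using bitangent_lines_four_lines[OF assms]
  unfolding bitangent_lines_def CQ_char2[OF assms(1)] square_on_add_qeval_square[OF assms(1)]
  by simp

lemma bitangents_eq_image_F2_lines:
  fixes \<omega> :: "'K::field" and P :: "'K^3^3"
  assumes "(2::'K) = 0" "\<omega>^2 + \<omega> + 1 = 0" "\<forall>a::'K. \<exists>b. b^2 = a"
    and "maps_curve P (feval 4 F) (CQ Q)"
  shows "bitangents F = image_lines (matrix_inv P) F2_lines"
proof -
  obtain c where P: "invertible P" and "c \<noteq> 0" and "\<And>v. CQ Q (P *v v) = c * feval 4 F v"
    using assms(4) unfolding maps_curve_def by blast
  then have "image_lines P (bitangent_lines (feval 4 F)) = F2_lines"
    using bitangent_lines_image[OF assms(3) P] bitangent_lines_CQ[OF assms(1-3)] by metis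
  then show ?thesis
    unfolding bitangents_eq_bitangent_lines using image_lines_matrix_inv(1)[OF P] by metis
qed

section \<open>\<open>\<Gamma>\<close> is the stabiliser of the seven \<open>F\<^sub>2\<close>-lines\<close>

lemma frob_mat_mult:
  assumes "(2::'K::field) = 0"
  shows "frob_mat (2^m) ((A::'K^3^3) ** B) = frob_mat (2^m) A ** frob_mat (2^m) B"
  unfolding frob_mat_def vec_eq_iff matrix_matrix_mult_3
  by (simp add: char2_power_two_power_add[OF assms] power_mult_distrib)

lemma frob_mat_mat_1: "q > 0 \<Longrightarrow> frob_mat q (mat 1 :: 'K::field^3^3) = mat 1"
  unfolding frob_mat_def vec_eq_iff by (simp add: mat_def)

lemma frob_mat_smat: "frob_mat q (smat c (A::'K::field^3^3)) = smat (c^q) (frob_mat q A)"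
  unfolding frob_mat_def vec_eq_iff by (simp add: power_mult_distrib)

lemma frob_mat_matrix_inv:
  assumes "(2::'K::field) = 0" and "invertible (A::'K^3^3)"
  shows "matrix_inv (frob_mat (2^m) A) = frob_mat (2^m) (matrix_inv A)"
  by (rule matrix_inv_unique)
    (simp add: frob_mat_mult[OF assms(1), symmetric] matrix_inv_right[OF assms(2)] frob_mat_mat_1)

lemma Gamma_iff_frob: "A \<in> Gamma \<longleftrightarrow> invertible A \<and> frob_mat 2 A = (A::'K::field^3^3)"
  unfolding Gamma_def frob_mat_def vec_eq_iff by (simp add: power2_eq_self_iff)

lemma frob_mat_Gamma:
  assumes "(S::'K::field^3^3) \<in> Gamma" and "q > 0" shows "frob_mat q S = S"
proof -
  have "x ^ q = x" if "x = 0 \<or> x = 1" for x :: 'K using that \<open>q > 0\<close> by auto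
  then show ?thesis using assms(1) unfolding Gamma_def frob_mat_def vec_eq_iff by simp
qed

lemma Gamma_matrix_inv:
  assumes "(2::'K::field) = 0" and "(A::'K^3^3) \<in> Gamma"
  shows "matrix_inv A \<in> Gamma"
  using assms frob_mat_matrix_inv[OF assms(1), of A 1] invertible_matrix_inv
  unfolding Gamma_iff_frob by auto

lemma Gamma_mult:
  assumes "(2::'K::field) = 0" and "(A::'K^3^3) \<in> Gamma" "B \<in> Gamma"
  shows "A ** B \<in> Gamma"
  using assms frob_mat_mult[OF assms(1), of 1 A B] invertible_mult
  unfolding Gamma_iff_frob by auto

lemma pgl_eq_Gamma_imp_eq:
  assumes "pgl_eq A B" "(A::'K::field^3^3) \<in> Gamma" "B \<in> Gamma"
  shows "A = B"
proof -
  obtain c where "c \<noteq> 0" and A: "A = smat c B" using assms(1) unfolding pgl_eq_def by blast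
  obtain i j where "B$i$j \<noteq> 0"
    using assms(3) nonzero_entry_if_invertible unfolding Gamma_def by blast
  then have "B$i$j = 1" using assms(3) unfolding Gamma_def by blast
  then have "A$i$j = c" unfolding A by simp
  then have "c \<in> {0, 1}" using assms(2) unfolding Gamma_def by auto
  then show ?thesis using \<open>c \<noteq> 0\<close> A by (simp add: smat_1)
qed

lemma F2_points_vector_matrix_mult:
  assumes "(2::'K::field) = 0" and "a \<in> F2_points" and "M \<in> Gamma"
  shows "a v* M \<in> (F2_points :: ('K^3) set)"
proof -
  have "inj ((*v) (transpose M))"
    using assms(3) invertible_transpose inj_matrix_vector_mult unfolding Gamma_def by blast
  moreover have "a \<noteq> 0" using assms(2) unfolding F2_points_def by blast
  ultimately have "transpose M *v a \<noteq> transpose M *v 0" by (metis injD)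
  then have "a v* M \<noteq> 0" by simp
  moreover have "(a v* M)$j \<in> {0, 1}" for j
    using assms(2,3) unfolding F2_points_def Gamma_def vector_matrix_mult_def sum_3 vec_lambda_beta
    by (intro char2_add_mem_01[OF assms(1)] mult_mem_01) auto
  ultimately show ?thesis unfolding F2_points_def by blast
qed

lemma image_lines_smat_F2_lines:
  assumes "(d::'K::field) \<noteq> 0"
  shows "image_lines (smat d S) F2_lines = image_lines S F2_lines"
proof -
  have "(\<lambda>v. smat d S *v v) ` line a = (\<lambda>v. S *v v) ` ((\<lambda>v. d *s v) ` line a)" for a
    by (simp add: smat_matrix_vector_mult image_image vector_scalar_commute)
  then have "(\<lambda>v. smat d S *v v) ` line a = (\<lambda>v. S *v v) ` line a" for a
    by (simp add: scale_image_line[OF assms])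
  then show ?thesis unfolding image_lines_def F2_lines_def image_image by simp
qed

lemma image_lines_Gamma_subset:
  assumes "(2::'K::field) = 0" and "(S::'K^3^3) \<in> Gamma"
  shows "image_lines S F2_lines \<subseteq> F2_lines"
proof -
  have "invertible S" using assms(2) unfolding Gamma_def by blast
  have "line (a v* matrix_inv S) \<in> F2_lines" if "a \<in> F2_points" for a
    using F2_points_vector_matrix_mult[OF assms(1) that Gamma_matrix_inv[OF assms]]
    unfolding F2_lines_def by blast
  then show ?thesis
    unfolding image_lines_def F2_lines_def image_image image_line[OF \<open>invertible S\<close>] by blast
qed

lemma image_lines_Gamma:
  assumes "(2::'K::field) = 0" and "(S::'K^3^3) \<in> Gamma"
  shows "image_lines S F2_lines = F2_lines"
proof
  show "image_lines S F2_lines \<subseteq> F2_lines" by (rule image_lines_Gamma_subset[OF assms])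
  have "invertible S" using assms(2) unfolding Gamma_def by auto
  have "image_lines (matrix_inv S) F2_lines \<subseteq> F2_lines"
    by (rule image_lines_Gamma_subset[OF assms(1) Gamma_matrix_inv[OF assms]])
  then show "F2_lines \<subseteq> image_lines S F2_lines"
    using image_lines_mono[of _ _ S] image_lines_matrix_inv(2)[OF \<open>invertible S\<close>] by metis
qed

lemma F2_point_image_if_stabilizes_F2_lines:
  fixes S :: "'K::field^3^3"
  assumes S: "invertible S" and stab: "image_lines S F2_lines = F2_lines" and a: "a \<in> F2_points"
  shows "\<exists>k. \<exists>p \<in> F2_points. k \<noteq> 0 \<and> a v* matrix_inv S = k *s p"
proof -
  have "line (a v* matrix_inv S) \<in> F2_lines"
    using stab a image_line[OF S] unfolding image_lines_def F2_lines_def by blast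
  then obtain p where p: "p \<in> F2_points" and "line (a v* matrix_inv S) = line p"
    unfolding F2_lines_def by blast
  moreover have "p \<noteq> 0" using p unfolding F2_points_def by blast
  ultimately obtain k where k: "a v* matrix_inv S = k *s p" using parallel_if_line_eq by blast
  have "(a v* matrix_inv S) v* S = a"
    by (simp add: vector_matrix_mul_assoc matrix_inv_left[OF S])
  then have "a v* matrix_inv S \<noteq> 0" using a unfolding F2_points_def by auto
  then have "k \<noteq> 0" using k by auto
  then show ?thesis using p k by blast
qed

text \<open>With rows \<open>U$i = k\<^sub>i p\<^sub>i\<close>, the identity \<open>(1,1,1) U = \<Sum> k\<^sub>i p\<^sub>i = \<mu> p\<^sub>4\<close> writes \<open>(k\<^sub>i)\<close> as \<open>\<mu>\<close>
  times an \<open>F\<^sub>2\<close>-vector, which must be \<open>(1,1,1)\<close> since no \<open>k\<^sub>i\<close> vanishes.\<close>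

lemma scaled_Gamma_if_rows_in_F2_points:
  fixes U :: "'K::field^3^3"
  assumes two: "(2::'K) = 0" and U: "invertible U"
    and rows: "\<And>i. \<exists>k. \<exists>p \<in> F2_points. k \<noteq> 0 \<and> U$i = k *s p"
    and sum: "vector [1, 1, 1] v* U = \<mu> *s p4" "p4 \<in> F2_points"
  shows "\<exists>M \<in> Gamma. U = smat \<mu> M"
proof -
  have "\<forall>i. \<exists>k p. p \<in> F2_points \<and> k \<noteq> 0 \<and> U$i = k *s p" using rows by blast
  from choice[OF this] obtain k where "\<forall>i. \<exists>p. p \<in> F2_points \<and> k i \<noteq> 0 \<and> U$i = k i *s p"
    by (elim exE)
  from choice[OF this] obtain p where kp: "\<forall>i. p i \<in> F2_points \<and> k i \<noteq> 0 \<and> U$i = k i *s p i"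
    by (elim exE)
  define M :: "'K^3^3" where "M = (\<chi> i. p i)"
  have U_eq: "U$i$j = k i * M$i$j" for i j using kp by (simp add: M_def)
  have "det U = k 1 * k 2 * k 3 * det M"
    unfolding det_3 U_eq by (simp add: algebra_simps)
  moreover have "det U \<noteq> 0" using U invertible_det_nz by blast
  ultimately have "det M \<noteq> 0" by auto
  moreover have "M$i$j \<in> {0, 1}" for i j using kp unfolding M_def F2_points_def by simp
  ultimately have M: "M \<in> Gamma" unfolding Gamma_def by (simp add: invertible_det_nz)
  then have "invertible M" unfolding Gamma_def by blast
  define n where "n = p4 v* matrix_inv M"
  have n: "n \<in> F2_points" unfolding n_def
    using F2_points_vector_matrix_mult[OF two sum(2) Gamma_matrix_inv[OF two M]] .
  have kM: "(\<chi> i. k i) v* M = vector [1, 1, 1] v* U"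
    by (simp add: vec_eq_iff vector_matrix_mult_def sum_3 U_eq)
  have "(\<chi> i. k i) = ((\<chi> i. k i) v* M) v* matrix_inv M"
    by (simp add: vector_matrix_mul_assoc matrix_inv_right[OF \<open>invertible M\<close>])
  also have "\<dots> = (\<mu> *s p4) v* matrix_inv M" unfolding kM sum(1) ..
  also have "\<dots> = \<mu> *s n" by (simp add: n_def scalar_vector_matrix_assoc)
  finally have k: "k i = \<mu> * n$i" for i by (simp add: vec_eq_iff)
  have "n$i = 1" for i
  proof -
    have "n$i \<in> {0, 1}" using n unfolding F2_points_def by blast
    moreover have "k i \<noteq> 0" using kp by blast
    ultimately show ?thesis using k[of i] by auto
  qed
  then have "U = smat \<mu> M" by (simp add: vec_eq_iff U_eq k)
  then show ?thesis using M by blast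
qed

lemma pgl_eq_Gamma_if_stabilizes_F2_lines:
  fixes S :: "'K::field^3^3"
  assumes two: "(2::'K) = 0" and S: "invertible S" and stab: "image_lines S F2_lines = F2_lines"
  shows "\<exists>S0 \<in> Gamma. pgl_eq S S0"
proof -
  define U where "U = matrix_inv S"
  have U: "invertible U" unfolding U_def by (rule invertible_matrix_inv[OF S])
  have axis: "axis i 1 \<in> (F2_points :: ('K^3) set)" for i
    using axis_eq_0_iff[of i "1::'K"] unfolding F2_points_def by (simp add: axis_def)
  have row: "axis i 1 v* U = U$i" for i
    using exhaust_3[of i] by (auto simp: vec_eq_iff vector_matrix_mult_def axis_def sum_3)
  have "\<exists>k. \<exists>p \<in> F2_points. k \<noteq> 0 \<and> U$i = k *s p" for i
    using F2_point_image_if_stabilizes_F2_lines[OF S stab axis[of i]]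
    unfolding U_def[symmetric] row .
  moreover have "vector [1, 1, 1] \<in> (F2_points :: ('K^3) set)"
    by (simp add: F2_points_def vec3_eq_0_iff forall_3)
  then obtain \<mu> p4 where "p4 \<in> F2_points" "vector [1, 1, 1] v* U = \<mu> *s p4"
    using F2_point_image_if_stabilizes_F2_lines[OF S stab] unfolding U_def by blast
  ultimately obtain M where M: "M \<in> Gamma" and UM: "U = smat \<mu> M"
    using scaled_Gamma_if_rows_in_F2_points[OF two U] by blast
  have "\<mu> \<noteq> 0"
  proof
    assume "\<mu> = 0"
    then have "U = 0" by (simp add: UM vec_eq_iff)
    then show False using nonzero_if_invertible[OF U] by blast
  qed
  have "S = matrix_inv U" unfolding U_def by (rule matrix_inv_matrix_inv[OF S, symmetric])
  also have "\<dots> = smat (inverse \<mu>) (matrix_inv M)"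
    unfolding UM using \<open>\<mu> \<noteq> 0\<close> M by (simp add: matrix_inv_smat Gamma_def)
  finally have "pgl_eq S (matrix_inv M)" using \<open>\<mu> \<noteq> 0\<close> by (intro pgl_eqI[of "inverse \<mu>"]) simp_all
  then show ?thesis using Gamma_matrix_inv[OF two M] by blast
qed

section \<open>Rationality over \<open>F\<^sub>q\<close>\<close>

lemma in_PGL3_iff_pgl_eq_frob_mat:
  assumes "q > 0" and R: "invertible (R::'K::field^3^3)"
  shows "in_PGL3 (Fq q) R \<longleftrightarrow> pgl_eq (frob_mat q R) R"
proof
  assume "in_PGL3 (Fq q) R"
  then obtain c where "c \<noteq> 0" and c: "\<And>i j. (c * R$i$j)^q = c * R$i$j"
    unfolding in_PGL3_def Fq_def by blast
  then have "(R$i$j)^q = (c / c^q) * R$i$j" for i j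
    using c[of i j] by (simp add: power_mult_distrib field_simps)
  then have "frob_mat q R = smat (c / c^q) R" unfolding frob_mat_def by (simp add: vec_eq_iff)
  then show "pgl_eq (frob_mat q R) R" using \<open>c \<noteq> 0\<close> by (intro pgl_eqI) simp_all
next
  assume "pgl_eq (frob_mat q R) R"
  then obtain \<nu> where fR: "(R$a$b)^q = \<nu> * R$a$b" for a b
    unfolding pgl_eq_def frob_mat_def by (auto simp: vec_eq_iff)
  obtain i j where "R$i$j \<noteq> 0" using nonzero_entry_if_invertible[OF R] .
  define e where "e = inverse (R$i$j)"
  have "e * R$i$j = 1" "e \<noteq> 0" unfolding e_def using \<open>R$i$j \<noteq> 0\<close> by simp_all
  have "e^q * \<nu> = (e^q * \<nu> * R$i$j) * e" using \<open>e * R$i$j = 1\<close> by (simp add: ac_simps)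
  also have "e^q * \<nu> * R$i$j = (e * R$i$j)^q" by (simp add: power_mult_distrib fR mult.assoc)
  finally have key: "e^q * \<nu> = e" using \<open>e * R$i$j = 1\<close> by simp
  have "(e * R$a$b)^q = e * R$a$b" for a b
  proof -
    have "(e * R$a$b)^q = (e^q * \<nu>) * R$a$b" by (simp add: power_mult_distrib fR mult.assoc)
    then show ?thesis by (simp only: key)
  qed
  then show "in_PGL3 (Fq q) R" unfolding in_PGL3_def Fq_def using R \<open>e \<noteq> 0\<close> by blast
qed

lemma pgl_eq_frob_mat:
  assumes "pgl_eq A (B::'K::field^3^3)" shows "pgl_eq (frob_mat q A) (frob_mat q B)"
proof -
  obtain c where "c \<noteq> 0" "A = smat c B" using assms unfolding pgl_eq_def by blast
  then show ?thesis by (intro pgl_eqI[of "c^q"]) (simp_all add: frob_mat_smat)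
qed

lemma frob_mat_conj_Gamma:
  fixes P G S :: "'K::field^3^3"
  assumes two: "(2::'K) = 0" and P: "invertible P"
    and PG: "pgl_eq (frob_mat (2^m) P ** matrix_inv P) G"
    and G: "invertible G" and S: "S \<in> Gamma"
  shows "frob_mat (2^m) (matrix_inv P ** S ** P) = matrix_inv P ** (matrix_inv G ** S ** G) ** P"
proof -
  obtain c where "c \<noteq> 0" and c: "frob_mat (2^m) P ** matrix_inv P = smat c G"
    using PG unfolding pgl_eq_def by blast
  have fP: "frob_mat (2^m) P = smat c (G ** P)"
    using arg_cong[OF c, of "\<lambda>X. X ** P"] by (simp add: matrix_inv_cancel(1)[OF P] smat_mult_left)
  have "frob_mat (2^m) (matrix_inv P) = matrix_inv (smat c (G ** P))"
    unfolding frob_mat_matrix_inv[OF two P, symmetric] fP ..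
  also have "\<dots> = smat (inverse c) (matrix_inv P ** matrix_inv G)"
    by (simp add: matrix_inv_smat[OF \<open>c \<noteq> 0\<close> invertible_mult[OF G P]] matrix_inv_mult[OF G P])
  finally show ?thesis
    using \<open>c \<noteq> 0\<close> frob_mat_Gamma[OF S, of "2^m"]
    by (simp add: frob_mat_mult[OF two] fP smat_mult_left smat_mult_right smat_smat smat_1
        matrix_mul_assoc)
qed

lemma in_PGL3_conj_iff_commute:
  fixes P G S R :: "'K::field^3^3"
  assumes two: "(2::'K) = 0" and P: "invertible P"
    and PG: "pgl_eq (frob_mat (2^m) P ** matrix_inv P) G"
    and G: "G \<in> Gamma" and S: "S \<in> Gamma" and R: "pgl_eq R (matrix_inv P ** S ** P)"
  shows "in_PGL3 (Fq (2^m)) R \<longleftrightarrow> S ** G = G ** S"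
proof -
  have "invertible G" "invertible S" using G S unfolding Gamma_def by auto
  then have "invertible R"
    using invertible_if_pgl_eq[OF R] by (simp add: P invertible_mult invertible_matrix_inv)
  have frob_R: "pgl_eq (frob_mat (2^m) R) (matrix_inv P ** (matrix_inv G ** S ** G) ** P)"
    using pgl_eq_frob_mat[OF R, of "2^m"]
    unfolding frob_mat_conj_Gamma[OF two P PG \<open>invertible G\<close> S] .
  have GSG: "matrix_inv G ** S ** G \<in> Gamma"
    using Gamma_mult[OF two Gamma_mult[OF two Gamma_matrix_inv[OF two G] S] G] .
  have "in_PGL3 (Fq (2^m)) R \<longleftrightarrow> pgl_eq (frob_mat (2^m) R) R"
    by (rule in_PGL3_iff_pgl_eq_frob_mat[OF _ \<open>invertible R\<close>]) simp
  also have "\<dots> \<longleftrightarrow> pgl_eq (matrix_inv P ** (matrix_inv G ** S ** G) ** P) (matrix_inv P ** S ** P)"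
    by (rule pgl_eq_cong_iff[OF frob_R R])
  also have "\<dots> \<longleftrightarrow> pgl_eq (matrix_inv G ** S ** G) S"
    by (rule pgl_eq_conj_iff[OF P])
  also have "\<dots> \<longleftrightarrow> matrix_inv G ** S ** G = S"
    using pgl_eq_Gamma_imp_eq[OF _ GSG S] pgl_eq_refl by auto
  also have "\<dots> \<longleftrightarrow> S ** G = G ** S"
    by (rule conj_eq_iff_commute[OF \<open>invertible G\<close>])
  finally show ?thesis .
qed

section \<open>The action of \<open>\<Gamma>\<close> on quadratic forms\<close>

text \<open>A polynomial identity in \<open>x, y, z\<close>, checked by splitting into the \<open>512\<close> cases of a
  \<open>0/1\<close>-matrix; the determinant hypothesis discards the singular ones.\<close>

lemma four_lines_F2_substitution:
  fixes a b c d e f g h i x y z :: "'K::field"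
  defines "\<phi> \<equiv> \<lambda>p q r. four_lines (vector [p, q, r] :: 'K^3)"
  assumes two: "(2::'K) = 0"
    and "a = 0 \<or> a = 1" "b = 0 \<or> b = 1" "c = 0 \<or> c = 1"
    and "d = 0 \<or> d = 1" "e = 0 \<or> e = 1" "f = 0 \<or> f = 1"
    and "g = 0 \<or> g = 1" "h = 0 \<or> h = 1" "i = 0 \<or> i = 1"
    and "a*e*i + b*f*g + c*d*h - a*f*h - b*d*i - c*e*g \<noteq> 0"
  shows "\<phi> (a*x + b*y + c*z) (d*x + e*y + f*z) (g*x + h*y + i*z) = \<phi> x y z
    + (\<phi> a d g * x*x + \<phi> b e h * y*y + \<phi> c f i * z*z
       + (\<phi> (a+b) (d+e) (g+h) + \<phi> a d g + \<phi> b e h) * x * y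
       + (\<phi> (b+c) (e+f) (h+i) + \<phi> b e h + \<phi> c f i) * y * z
       + (\<phi> (a+c) (d+f) (g+i) + \<phi> a d g + \<phi> c f i) * z * x)^2"
  using assms(3-)
  apply (subst char2_eq_iff_add_eq_0[OF two])
  apply (elim disjE; hypsubst)
  apply (simp_all only: \<phi>_def four_lines_def vector_3 power2_eq_square
      mult_zero_left mult_zero_right mult_1_left mult_1_right add_0_left add_0_right diff_0
      diff_0_right one_add_one two char2_add_self[OF two] char2_numeral_Bit0[OF two]
      char2_numeral_Bit1[OF two] char2_diff[OF two] char2_minus[OF two]
      not_True_eq_False not_False_eq_True simp_thms)
  apply (simp_all only: distrib_left distrib_right)
  apply (simp_all only: add.assoc mult.assoc)
  apply (simp_all only: ac_simps)
  apply (simp_all add: char2_add_self[OF two] char2_add_cancel_left[OF two])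
  done

lemma qeval_basis:
  "qeval Q (vector [1, 0, 0]) = qa Q" "qeval Q (vector [0, 1, 0]) = qb Q"
  "qeval Q (vector [0, 0, 1]) = qc Q" "qeval Q (vector [1, 1, 0]) = qa Q + qb Q + qd Q"
  "qeval Q (vector [0, 1, 1]) = qb Q + qc Q + qe Q"
  "qeval Q (vector [1, 0, 1]) = qa Q + qc Q + qf Q"
  "qeval Q (vector [1, 1, 1]) = qa Q + qb Q + qc Q + qd Q + qe Q + qf Q"
  unfolding qeval_def by (simp_all add: algebra_simps)

lemma qform_eqI:
  "qa Q1 = qa Q2 \<Longrightarrow> qb Q1 = qb Q2 \<Longrightarrow> qc Q1 = qc Q2 \<Longrightarrow> qd Q1 = qd Q2 \<Longrightarrow> qe Q1 = qe Q2
    \<Longrightarrow> qf Q1 = qf Q2 \<Longrightarrow> Q1 = Q2"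
  by (cases Q1; cases Q2) simp

lemma qform_eq_if_qeval_eq:
  assumes "\<And>v. qeval Q1 v = qeval (Q2::'K::field qform) v"
  shows "Q1 = Q2"
  using assms[of "vector [1, 0, 0]"] assms[of "vector [0, 1, 0]"] assms[of "vector [0, 0, 1]"]
    assms[of "vector [1, 1, 0]"] assms[of "vector [0, 1, 1]"] assms[of "vector [1, 0, 1]"]
  unfolding qeval_basis by (intro qform_eqI) auto

text \<open>At the six \<open>F\<^sub>2\<close>-points where \<open>xyz(x + y + z)\<close> vanishes,
  \<open>(Hq S)\<^sup>2\<close> equals \<open>xyz(x + y + z) \<circ> S\<close>, whose values there are \<open>0\<close> or \<open>1\<close> and hence their own
  square roots; the coefficients are obtained from these values by polarisation.\<close>

definition correction_form :: "'K::field^3^3 \<Rightarrow> 'K qform" where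
  "correction_form S = (let h = \<lambda>v. four_lines (S *v v) in
     QF (h (vector [1, 0, 0])) (h (vector [0, 1, 0])) (h (vector [0, 0, 1]))
        (h (vector [1, 1, 0]) + h (vector [1, 0, 0]) + h (vector [0, 1, 0]))
        (h (vector [0, 1, 1]) + h (vector [0, 1, 0]) + h (vector [0, 0, 1]))
        (h (vector [1, 0, 1]) + h (vector [1, 0, 0]) + h (vector [0, 0, 1])))"

lemma four_lines_Gamma:
  assumes two: "(2::'K::field) = 0" and S: "(S::'K^3^3) \<in> Gamma"
  shows "four_lines (S *v v) = four_lines v + (qeval (correction_form S) v)^2"
proof -
  let ?\<phi> = "\<lambda>p q r. four_lines (vector [p, q, r] :: 'K^3)"
  have "S$i$j = 0 \<or> S$i$j = 1" for i j using S unfolding Gamma_def by blast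
  moreover have "det S \<noteq> 0" using S invertible_det_nz unfolding Gamma_def by blast
  moreover have "qeval (correction_form S) v
    = ?\<phi> (S$1$1) (S$2$1) (S$3$1) * v$1* v$1 + ?\<phi> (S$1$2) (S$2$2) (S$3$2) * v$2* v$2
      + ?\<phi> (S$1$3) (S$2$3) (S$3$3) * v$3* v$3
      + (?\<phi> (S$1$1+S$1$2) (S$2$1+S$2$2) (S$3$1+S$3$2) + ?\<phi> (S$1$1) (S$2$1) (S$3$1)
         + ?\<phi> (S$1$2) (S$2$2) (S$3$2)) * v$1 * v$2
      + (?\<phi> (S$1$2+S$1$3) (S$2$2+S$2$3) (S$3$2+S$3$3) + ?\<phi> (S$1$2) (S$2$2) (S$3$2)
         + ?\<phi> (S$1$3) (S$2$3) (S$3$3)) * v$2 * v$3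
      + (?\<phi> (S$1$1+S$1$3) (S$2$1+S$2$3) (S$3$1+S$3$3) + ?\<phi> (S$1$1) (S$2$1) (S$3$1)
         + ?\<phi> (S$1$3) (S$2$3) (S$3$3)) * v$3 * v$1"
    unfolding correction_form_def Let_def qeval_def matrix_vector_mult_vector_3
    by (simp add: power2_eq_square)
  moreover have "S *v v = vector [S$1$1 * v$1 + S$1$2 * v$2 + S$1$3 * v$3,
        S$2$1 * v$1 + S$2$2 * v$2 + S$2$3 * v$3, S$3$1 * v$1 + S$3$2 * v$2 + S$3$3 * v$3]"
    "four_lines v = ?\<phi> (v$1) (v$2) (v$3)"
    by (simp_all add: vec3_eq_iff matrix_vector_mult_3 four_lines_def)
  ultimately show ?thesis
    unfolding det_3 by (simp only:) (rule four_lines_F2_substitution[OF two]; simp)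
qed

lemma Hq_Gamma:
  assumes two: "(2::'K::field) = 0" and S: "(S::'K^3^3) \<in> Gamma"
  shows "Hq S = correction_form S"
proof -
  let ?P = "\<lambda>H. \<forall>v. four_lines (S *v v) = four_lines v + (qeval H v)^2"
  have "?P H \<longleftrightarrow> H = correction_form S" for H
  proof
    assume "?P H"
    then have "(qeval H v)^2 = (qeval (correction_form S) v)^2" for v
      using four_lines_Gamma[OF two S, of v] by simp
    then have "qeval H v = qeval (correction_form S) v" for v
      using char2_power2_inj[OF two] by blast
    then show "H = correction_form S" by (rule qform_eq_if_qeval_eq)
  qed (use four_lines_Gamma[OF two S] in simp)
  moreover have "Hq S = (THE H. ?P H)" unfolding Hq_def four_lines_def Let_def ..
  ultimately show ?thesis by simp
qed

lemma four_lines_Gamma_Hq: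
  assumes "(2::'K::field) = 0" and "(S::'K^3^3) \<in> Gamma"
  shows "four_lines (S *v v) = four_lines v + (qeval (Hq S) v)^2"
  unfolding Hq_Gamma[OF assms] by (rule four_lines_Gamma[OF assms])

definition qcomp :: "'K::field qform \<Rightarrow> 'K^3^3 \<Rightarrow> 'K qform" where
  "qcomp Q M = (let h = \<lambda>v. qeval Q (M *v v) in
     QF (h (vector [1, 0, 0])) (h (vector [0, 1, 0])) (h (vector [0, 0, 1]))
        (h (vector [1, 1, 0]) - h (vector [1, 0, 0]) - h (vector [0, 1, 0]))
        (h (vector [0, 1, 1]) - h (vector [0, 1, 0]) - h (vector [0, 0, 1]))
        (h (vector [1, 0, 1]) - h (vector [0, 0, 1]) - h (vector [1, 0, 0])))"

lemma qeval_qcomp: "qeval (qcomp Q M) v = qeval Q (M *v v)"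
  unfolding qcomp_def Let_def qeval_def matrix_vector_mult_3 by (simp add: power2_eq_square) algebra

definition qadd :: "'K::field qform \<Rightarrow> 'K qform \<Rightarrow> 'K qform" where
  "qadd Q1 Q2 = QF (qa Q1 + qa Q2) (qb Q1 + qb Q2) (qc Q1 + qc Q2) (qd Q1 + qd Q2) (qe Q1 + qe Q2)
     (qf Q1 + qf Q2)"

lemma qeval_qadd: "qeval (qadd Q1 Q2) v = qeval Q1 v + qeval Q2 v"
  unfolding qadd_def qeval_def by (simp add: algebra_simps)

lemma qeval_gact:
  "qeval (gact S Q) v = qeval Q (matrix_inv S *v v) + qeval (Hq (matrix_inv S)) v"
proof -
  let ?P = "\<lambda>Q'. \<forall>v. qeval Q' v = qeval Q (matrix_inv S *v v) + qeval (Hq (matrix_inv S)) v"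
  have "?P Q' \<longleftrightarrow> Q' = qadd (qcomp Q (matrix_inv S)) (Hq (matrix_inv S))" for Q'
    by (auto simp: qeval_qadd qeval_qcomp intro: qform_eq_if_qeval_eq)
  then have "gact S Q = qadd (qcomp Q (matrix_inv S)) (Hq (matrix_inv S))"
    unfolding gact_def by simp
  then show ?thesis by (simp add: qeval_qadd qeval_qcomp)
qed

lemma CQ_gact:
  assumes two: "(2::'K::field) = 0" and S: "(S::'K^3^3) \<in> Gamma"
  shows "CQ (gact S Q) (S *v w) = CQ Q w"
proof -
  have "invertible S" using S unfolding Gamma_def by blast
  define H where "H = Hq (matrix_inv S)"
  have "four_lines w = four_lines (S *v w) + (qeval H (S *v w))^2"
    using four_lines_Gamma_Hq[OF two Gamma_matrix_inv[OF two S], of "S *v w"]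
    unfolding H_def matrix_inv_cancel_vector(2)[OF \<open>invertible S\<close>] .
  moreover have "qeval (gact S Q) (S *v w) = qeval Q w + qeval H (S *v w)"
    unfolding qeval_gact H_def matrix_inv_cancel_vector(2)[OF \<open>invertible S\<close>] ..
  ultimately show ?thesis
    by (simp add: CQ_char2[OF two] char2_power2_add[OF two] ac_simps)
qed

lemma CQ_unique:
  fixes Q1 Q2 :: "'K::field qform"
  assumes two: "(2::'K) = 0" and sqrt: "\<forall>a::'K. \<exists>b. b^2 = a"
    and CQ: "\<And>v. CQ Q1 v = \<kappa> * CQ Q2 v"
  shows "Q1 = Q2"
proof -
  obtain k where k: "k^2 = \<kappa>" using sqrt by blast
  have on_lines: "qeval Q1 v = k * qeval Q2 v" if "four_lines v = 0" for v
  proof (rule char2_power2_inj[OF two])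
    show "(qeval Q1 v)^2 = (k * qeval Q2 v)^2"
      using CQ[of v] that unfolding CQ_char2[OF two] k[symmetric] by (simp add: power_mult_distrib)
  qed
  have "four_lines (vector [1, 0, 0] :: 'K^3) = 0" "four_lines (vector [0, 1, 0] :: 'K^3) = 0"
    "four_lines (vector [0, 0, 1] :: 'K^3) = 0" "four_lines (vector [1, 1, 0] :: 'K^3) = 0"
    "four_lines (vector [0, 1, 1] :: 'K^3) = 0" "four_lines (vector [1, 0, 1] :: 'K^3) = 0"
    unfolding four_lines_def by simp_all
  note coeffs = this[THEN on_lines, unfolded qeval_basis]
  then have Q1: "qa Q1 = k * qa Q2" "qb Q1 = k * qb Q2" "qc Q1 = k * qc Q2"
    "qd Q1 = k * qd Q2" "qe Q1 = k * qe Q2" "qf Q1 = k * qf Q2"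
    by (simp_all add: algebra_simps)
  have "four_lines (vector [1, 1, 1] :: 'K^3) = 1"
    using char2_add_self[OF two, of 1] unfolding four_lines_def by simp
  then have "1 + (k * qeval Q2 (vector [1, 1, 1]))^2 = k^2 * (1 + (qeval Q2 (vector [1, 1, 1]))^2)"
    using CQ[of "vector [1, 1, 1]"] unfolding CQ_char2[OF two] k qeval_basis Q1
    by (simp add: algebra_simps)
  then have "k^2 = 1^2" by (simp add: algebra_simps power_mult_distrib)
  then have "k = 1" by (rule char2_power2_inj[OF two])
  then show ?thesis using Q1 by (intro qform_eqI) simp_all
qed

section \<open>Isomorphisms of the curves\<close>

lemma maps_curveI:
  "invertible A \<Longrightarrow> c \<noteq> 0 \<Longrightarrow> (\<And>v. g (A *v v) = c * f v) \<Longrightarrow> maps_curve A f g"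
  unfolding maps_curve_def by blast

lemma maps_curve_mult:
  assumes "maps_curve A f g" "maps_curve (B::'K::field^3^3) g h"
  shows "maps_curve (B ** A) f h"
proof -
  obtain c d where "c \<noteq> 0" "\<And>v. g (A *v v) = c * f v" "d \<noteq> 0" "\<And>v. h (B *v v) = d * g v"
    using assms unfolding maps_curve_def by blast
  then have "h ((B ** A) *v v) = (d * c) * f v" for v by (simp flip: matrix_vector_mul_assoc)
  moreover have "invertible (B ** A)" using assms invertible_mult unfolding maps_curve_def by blast
  ultimately show ?thesis using \<open>c \<noteq> 0\<close> \<open>d \<noteq> 0\<close> by (intro maps_curveI[of _ "d * c"]) simp_all
qed

lemma maps_curve_matrix_inv:
  assumes "maps_curve (A::'K::field^3^3) f g"
  shows "maps_curve (matrix_inv A) g f"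
proof -
  obtain c where A: "invertible A" and "c \<noteq> 0" and c: "\<And>v. g (A *v v) = c * f v"
    using assms unfolding maps_curve_def by blast
  have "f (matrix_inv A *v v) = inverse c * g v" for v
    using c[of "matrix_inv A *v v"] \<open>c \<noteq> 0\<close> by (simp add: matrix_inv_cancel_vector[OF A])
  then show ?thesis
    using \<open>c \<noteq> 0\<close> by (intro maps_curveI[of _ "inverse c"] invertible_matrix_inv[OF A]) simp_all
qed

lemma maps_curve_conj_iff:
  assumes P: "maps_curve (P::'K::field^3^3) f g" "maps_curve P f' g'"
  shows "maps_curve (matrix_inv P ** S ** P) f f' \<longleftrightarrow> maps_curve S g g'"
proof
  assume "maps_curve (matrix_inv P ** S ** P) f f'"
  then have "maps_curve (P ** (matrix_inv P ** S ** P) ** matrix_inv P) g g'"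
    using maps_curve_mult maps_curve_matrix_inv[OF P(1)] P(2) by blast
  moreover have "invertible P" using P unfolding maps_curve_def by blast
  ultimately show "maps_curve S g g'"
    by (simp add: matrix_mul_assoc matrix_inv_right matrix_inv_cancel flip: matrix_mul_assoc)
next
  assume "maps_curve S g g'"
  then have "maps_curve (matrix_inv P ** (S ** P)) f f'"
    using maps_curve_mult P(1) maps_curve_matrix_inv[OF P(2)] by blast
  then show "maps_curve (matrix_inv P ** S ** P) f f'" by (simp add: matrix_mul_assoc)
qed

lemma maps_curve_smat_iff:
  assumes "(d::'K::field) \<noteq> 0" and hom: "\<And>v. g (d *s v) = d^n * g v"
  shows "maps_curve (smat d A) f g \<longleftrightarrow> maps_curve (A::'K^3^3) f g"
proof -
  have "invertible (smat d A) \<longleftrightarrow> invertible A"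
    using invertible_smat[OF assms(1)] invertible_smat[of "inverse d" "smat d A"] assms(1)
    by (auto simp: smat_smat smat_1)
  moreover have "(\<forall>v. g (smat d A *v v) = c * f v) \<longleftrightarrow> (\<forall>v. g (A *v v) = (c / d^n) * f v)" for c
    using assms by (auto simp: smat_matrix_vector_mult hom field_simps)
  moreover have "c / d^n \<noteq> 0 \<longleftrightarrow> c \<noteq> 0" for c using assms(1) by simp
  moreover have "c = (c * d^n) / d^n" for c using assms(1) by simp
  ultimately show ?thesis unfolding maps_curve_def by metis
qed

lemma feval_scale: "feval n F (d *s v) = d^n * feval n F (v::'K::comm_ring_1^3)"
proof -
  have "mon e (d *s v) = d^n * mon e v" if "e \<in> exps n" for e
    using that unfolding exps_def mon_def by (auto simp: power_mult_distrib power_add)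
  then show ?thesis unfolding feval_def by (simp add: sum_distrib_left algebra_simps)
qed

lemma maps_curve_Gamma_CQ_iff:
  assumes two: "(2::'K::field) = 0" and sqrt: "\<forall>a::'K. \<exists>b. b^2 = a" and S: "(S::'K^3^3) \<in> Gamma"
  shows "maps_curve S (CQ Q) (CQ Q') \<longleftrightarrow> Q' = gact S Q"
proof
  have "invertible S" using S unfolding Gamma_def by blast
  assume "maps_curve S (CQ Q) (CQ Q')"
  then obtain c where "\<And>w. CQ Q' (S *v w) = c * CQ Q w" unfolding maps_curve_def by blast
  then have "CQ Q' y = c * CQ (gact S Q) y" for y
    using CQ_gact[OF two S, of Q "matrix_inv S *v y"]
    by (metis matrix_inv_cancel_vector(1)[OF \<open>invertible S\<close>])
  then show "Q' = gact S Q" by (rule CQ_unique[OF two sqrt])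
next
  assume "Q' = gact S Q"
  then show "maps_curve S (CQ Q) (CQ Q')"
    using S CQ_gact[OF two S] unfolding Gamma_def by (intro maps_curveI[of _ 1]) simp_all
qed

lemma maps_curve_conj_Gamma_iff_gact:
  fixes P S R :: "'K::field^3^3"
  assumes two: "(2::'K) = 0" and sqrt: "\<forall>a::'K. \<exists>b. b^2 = a"
    and phi: "maps_curve P (feval 4 F) (CQ Q)" and phi': "maps_curve P (feval 4 F') (CQ Q')"
    and S: "S \<in> Gamma" and RS: "pgl_eq R (matrix_inv P ** S ** P)"
  shows "maps_curve R (feval 4 F) (feval 4 F') \<longleftrightarrow> gact S Q = Q'"
proof -
  obtain d where "d \<noteq> 0" "R = smat d (matrix_inv P ** S ** P)"
    using RS unfolding pgl_eq_def by blast
  then have "maps_curve R (feval 4 F) (feval 4 F')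
      \<longleftrightarrow> maps_curve (matrix_inv P ** S ** P) (feval 4 F) (feval 4 F')"
    using maps_curve_smat_iff feval_scale by blast
  also have "\<dots> \<longleftrightarrow> maps_curve S (CQ Q) (CQ Q')" by (rule maps_curve_conj_iff[OF phi phi'])
  also have "\<dots> \<longleftrightarrow> gact S Q = Q'" using maps_curve_Gamma_CQ_iff[OF two sqrt S] by auto
  finally show ?thesis .
qed

lemma Aut_lines_bitangents_iff:
  fixes P G R :: "'K::field^3^3"
  assumes two: "(2::'K) = 0" and P: "invertible P"
    and PG: "pgl_eq (frob_mat (2^m) P ** matrix_inv P) G" and G: "G \<in> Gamma"
    and bitangents: "bitangents F = image_lines (matrix_inv P) F2_lines" and R: "invertible R"
  shows "R \<in> Aut_lines (Fq (2^m)) (bitangents F)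
         \<longleftrightarrow> (\<exists>S \<in> centralizer G. pgl_eq R (matrix_inv P ** S ** P))"
proof -
  define R' where "R' = P ** R ** matrix_inv P"
  have "matrix_inv P ** R' ** P = R"
    unfolding R'_def
    by (simp add: matrix_mul_assoc matrix_inv_cancel[OF P] matrix_inv_left[OF P]
        flip: matrix_mul_assoc)
  then have conj: "pgl_eq R (matrix_inv P ** S ** P) \<longleftrightarrow> pgl_eq R' S" for S
    using pgl_eq_conj_iff[OF P, of R' S] by simp
  have stab: "image_lines R (bitangents F) = bitangents F \<longleftrightarrow> image_lines R' F2_lines = F2_lines"
    unfolding bitangents R'_def by (rule image_lines_conj_eq_iff[OF P])
  show ?thesis
  proof
    assume "R \<in> Aut_lines (Fq (2^m)) (bitangents F)"
    then have rat: "in_PGL3 (Fq (2^m)) R" and "image_lines R' F2_lines = F2_lines"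
      using stab unfolding Aut_lines_def by auto
    moreover have "invertible R'"
      unfolding R'_def by (intro invertible_mult P R invertible_matrix_inv)
    ultimately obtain S where S: "S \<in> Gamma" "pgl_eq R (matrix_inv P ** S ** P)"
      using pgl_eq_Gamma_if_stabilizes_F2_lines[OF two] conj by blast
    then have "S ** G = G ** S" using in_PGL3_conj_iff_commute[OF two P PG G] rat by blast
    then show "\<exists>S \<in> centralizer G. pgl_eq R (matrix_inv P ** S ** P)"
      using S unfolding centralizer_def by blast
  next
    assume "\<exists>S \<in> centralizer G. pgl_eq R (matrix_inv P ** S ** P)"
    then obtain S where S: "S \<in> Gamma" "S ** G = G ** S"
      and RS: "pgl_eq R (matrix_inv P ** S ** P)"
      unfolding centralizer_def by blast
    have "in_PGL3 (Fq (2^m)) R" using in_PGL3_conj_iff_commute[OF two P PG G S(1) RS] S(2) by blast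
    moreover obtain d where "d \<noteq> 0" "R' = smat d S" using RS conj unfolding pgl_eq_def by blast
    then have "image_lines R' F2_lines = F2_lines"
      using image_lines_smat_F2_lines[of d S] image_lines_Gamma[OF two S(1)] by simp
    ultimately show "R \<in> Aut_lines (Fq (2^m)) (bitangents F)"
      using stab unfolding Aut_lines_def by blast
  qed
qed

lemma Isom_iff_centralizer_gact:
  fixes P G R :: "'K::field^3^3" and \<omega> :: 'K
  assumes two: "(2::'K) = 0" and \<omega>: "\<omega>^2 + \<omega> + 1 = 0" and sqrt: "\<forall>a::'K. \<exists>b. b^2 = a"
    and phi: "maps_curve P (feval 4 F) (CQ Q)" and phi': "maps_curve P (feval 4 F') (CQ Q')"
    and PG: "pgl_eq (frob_mat (2^m) P ** matrix_inv P) G" and G: "G \<in> Gamma" and R: "invertible R"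
  shows "in_PGL3 (Fq (2^m)) R \<and> maps_curve R (feval 4 F) (feval 4 F')
         \<longleftrightarrow> (\<exists>S \<in> centralizer G. gact S Q = Q' \<and> pgl_eq R (matrix_inv P ** S ** P))"
proof -
  have P: "invertible P" using phi unfolding maps_curve_def by blast
  have bitangents: "bitangents F = image_lines (matrix_inv P) F2_lines"
    and bitangents': "bitangents F' = image_lines (matrix_inv P) F2_lines"
    using bitangents_eq_image_F2_lines[OF two \<omega> sqrt] phi phi' by blast+
  note Aut_iff = Aut_lines_bitangents_iff[OF two P PG G bitangents R]
  note Isom_iff = maps_curve_conj_Gamma_iff_gact[OF two sqrt phi phi']
  show ?thesis
  proof
    assume asm: "in_PGL3 (Fq (2^m)) R \<and> maps_curve R (feval 4 F) (feval 4 F')"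
    then have maps: "maps_curve R (feval 4 F) (feval 4 F')" by blast
    then obtain c where "c \<noteq> 0" "\<And>v. feval 4 F' (R *v v) = c * feval 4 F v"
      unfolding maps_curve_def by blast
    then have "image_lines R (bitangents F) = bitangents F"
      using bitangent_lines_image[OF sqrt R] bitangents bitangents'
      unfolding bitangents_eq_bitangent_lines by metis
    then obtain S where "S \<in> centralizer G" "pgl_eq R (matrix_inv P ** S ** P)"
      using Aut_iff asm unfolding Aut_lines_def by blast
    then show "\<exists>S \<in> centralizer G. gact S Q = Q' \<and> pgl_eq R (matrix_inv P ** S ** P)"
      using Isom_iff maps unfolding centralizer_def by blast
  next
    assume "\<exists>S \<in> centralizer G. gact S Q = Q' \<and> pgl_eq R (matrix_inv P ** S ** P)"
    then show "in_PGL3 (Fq (2^m)) R \<and> maps_curve R (feval 4 F) (feval 4 F')"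
      using Aut_iff Isom_iff unfolding Aut_lines_def centralizer_def by blast
  qed
qed

theorem lemma1p5:
  fixes q m :: nat and F :: "'K::field tform" and G P :: "'K^3^3" and Q :: "'K qform"
  assumes K: "is_F2bar TYPE('K)"
    and q: "q = 2 ^ m" "m \<ge> 1"
    and C: "nonsing_quartic F" "ordinary F" "defined_over (Fq q) F"
    and G: "G \<in> Gamma"
    and Q: "Q \<in> DD q G"
    and phi: "maps_curve P (feval 4 F) (CQ Q)"
    and phiG: "pgl_eq (frob_mat q P ** matrix_inv P) G"
  shows
    "(\<forall>R. invertible R \<longrightarrow>
        (R \<in> Aut_lines (Fq q) (bitangents F)
         \<longleftrightarrow> (\<exists>S \<in> centralizer G. pgl_eq R (matrix_inv P ** S ** P))))
     \<and> (\<forall>F' Q'. nonsing_quartic F' \<and> ordinary F' \<and> Q' \<in> QQ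
          \<and> maps_curve P (feval 4 F') (CQ Q') \<longrightarrow>
        (\<forall>R. invertible R \<longrightarrow>
          ((in_PGL3 (Fq q) R \<and> maps_curve R (feval 4 F) (feval 4 F'))
           \<longleftrightarrow> (\<exists>S \<in> centralizer G. gact S Q = Q' \<and> pgl_eq R (matrix_inv P ** S ** P)))))
     \<and> (\<forall>R. invertible R \<longrightarrow>
          ((in_PGL3 (Fq q) R \<and> maps_curve R (feval 4 F) (feval 4 F))
           \<longleftrightarrow> (\<exists>S \<in> centralizer G. gact S Q = Q \<and> pgl_eq R (matrix_inv P ** S ** P))))"
proof -
  txt \<open>The hypotheses \<open>C\<close>, \<open>Q\<close> and \<open>m \<ge> 1\<close>, and those on \<open>F'\<close> and \<open>Q'\<close> other than the existence of
    \<open>\<phi>\<close>, serve in the paper to produce \<open>\<phi>\<close>.\<close>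
  have two: "(2::'K) = 0" by (rule F2bar_char2[OF K])
  have sqrt: "\<forall>a::'K. \<exists>b. b^2 = a" by (rule F2bar_sqrt[OF K])
  obtain \<omega> :: 'K where \<omega>: "\<omega>^2 + \<omega> + 1 = 0" using F2bar_cube_root_of_unity[OF K] by blast
  have P: "invertible P" using phi unfolding maps_curve_def by blast
  have bitangents: "bitangents F = image_lines (matrix_inv P) F2_lines"
    by (rule bitangents_eq_image_F2_lines[OF two \<omega> sqrt phi])
  note PG = phiG[unfolded q(1)]
  show ?thesis
    unfolding q(1)
    using Aut_lines_bitangents_iff[OF two P PG G bitangents]
      Isom_iff_centralizer_gact[OF two \<omega> sqrt phi _ PG G] phi
    by blast
qed

end
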